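(* Let $G^\dagger=(V^\dagger,E^\dagger)$ be a graph whose vertices are partitioned into blossom and non-blossom vertices, with weights $w^\dagger\in\mathbb{R}^{|E^\dagger|}$. Let $G^\ddagger=(V^\dagger,E^\ddagger)$ be obtained by duplicating every edge $e\in E^\dagger$ into two parallel edges $e_1,e_2$, with weights $w^\ddagger_{e_1}=w^\ddagger_{e_2}=w^\dagger_e$. Consider the LP: minimize $w^\ddagger\cdot x$ subject to $\sum_{e\in\delta(v)}x_e=2$ for every non-blossom $v\in V^\dagger$, $\sum_{e\in\delta(v)}x_e\ge 2$ for every blossom vertex $v\in V^\dagger$, $x\in[0,1]^{|E^\ddagger|}$ (here $\delta(v)$ is taken in $G^\ddagger$). Consider the graphical model on binary variables $x=[x_e]_{e\in E^\ddagger}\in\{0,1\}^{|E^\ddagger|}$, $$\Pr[X=x]\propto\prod_{e\in E^\ddagger}e^{-w^\ddagger_e x_e}\prod_{v\in V^\dagger}\psi_v(x_{\delta(v)}),$$ where $\psi_v(x_{\delta(v)})=1$ if $v$ is non-blossom and $\sum_{e\in\delta(v)}x_e=2$, or if $v$ is a blossom vertex and $\sum_{e\in\delta(v)}x_e\ge2$, and $\psi_v(x_{\delta(v)})=0$ otherwise. If the LP has a unique optimal solution $x^*$, then max-product belief propagation applied to this graphical model converges to $x^*$, i.e., its estimate $z^{BP}$ equals $x^*$ for all sufficiently many iterations.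
   Context: Max-product BP on a graphical model $\Pr[z]\propto\prod_i\psi_i(z_i)\prod_{\alpha\in F}\psi_\alpha(z_\alpha)$ with binary variables: for each variable $i$ let $F_i=\{\alpha\in F: i\in\alpha\}$. At iteration $t$ it maintains messages $m^t_{\alpha\to i}(c),m^t_{i\to\alpha}(c)$, $c\in\{0,1\}$, for $\alpha\in F_i$, updated by $m^{t+1}_{\alpha\to i}(c)=\max_{z_\alpha:z_i=c}\psi_\alpha(z_\alpha)\prod_{j\in\alpha\setminus i}m^t_{j\to\alpha}(z_j)$ and $m^{t+1}_{i\to\alpha}(c)=\psi_i(c)\prod_{\alpha'\in F_i\setminus\alpha}m^t_{\alpha'\to i}(c)$. Beliefs are $b_i[c]=\psi_i(c)\prod_{\alpha\in F_i}m_{\alpha\to i}(c)$ and the BP estimate is $z^{BP}_i=1$ if $b_i[1]>b_i[0]$, $0$ if $b_i[1]<b_i[0]$, and undetermined ("?") if equal. Here the variables are the $x_e$, $\psi_e(c)=e^{-w^\ddagger_e c}$, and the factors are the $\psi_v$, $v\in V^\dagger$ (factor $v$ involves the variables $x_e$, $e\in\delta(v)$). *)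

theory Defs
  imports Main "HOL-Library.Extended_Real" Complex_Main
begin

(* G-dagger: vertex set V, edge set E, ends e = the two endpoints of edge e,
   B = set of blossom vertices, w = edge weights.
   G-double-dagger: edge (e,b), b :: bool, are the two parallel copies e_1, e_2 of e. *)

definition ddedges :: "'e set \<Rightarrow> ('e \<times> bool) set" where
  "ddedges E = E \<times> UNIV"

definition delta :: "'e set \<Rightarrow> ('e \<Rightarrow> 'v set) \<Rightarrow> 'v \<Rightarrow> ('e \<times> bool) set" where
  "delta E ends v = {i \<in> ddedges E. v \<in> ends (fst i)}"

definition wdd :: "('e \<Rightarrow> real) \<Rightarrow> ('e \<times> bool) \<Rightarrow> real" where
  "wdd w i = w (fst i)"

definition lp_feasible :: "'v set \<Rightarrow> 'e set \<Rightarrow> ('e \<Rightarrow> 'v set) \<Rightarrow> 'v set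
     \<Rightarrow> (('e \<times> bool) \<Rightarrow> real) \<Rightarrow> bool" where
  "lp_feasible V E ends B x \<longleftrightarrow>
     (\<forall>i. i \<notin> ddedges E \<longrightarrow> x i = 0) \<and>
     (\<forall>i \<in> ddedges E. 0 \<le> x i \<and> x i \<le> 1) \<and>
     (\<forall>v \<in> V - B. (\<Sum>i \<in> delta E ends v. x i) = 2) \<and>
     (\<forall>v \<in> V \<inter> B. (\<Sum>i \<in> delta E ends v. x i) \<ge> 2)"

definition lp_cost :: "'e set \<Rightarrow> ('e \<Rightarrow> real) \<Rightarrow> (('e \<times> bool) \<Rightarrow> real) \<Rightarrow> real" where
  "lp_cost E w x = (\<Sum>i \<in> ddedges E. wdd w i * x i)"

definition lp_optimal :: "'v set \<Rightarrow> 'e set \<Rightarrow> ('e \<Rightarrow> 'v set) \<Rightarrow> 'v set \<Rightarrow> ('e \<Rightarrow> real)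
     \<Rightarrow> (('e \<times> bool) \<Rightarrow> real) \<Rightarrow> bool" where
  "lp_optimal V E ends B w x \<longleftrightarrow> lp_feasible V E ends B x \<and>
     (\<forall>y. lp_feasible V E ends B y \<longrightarrow> lp_cost E w x \<le> lp_cost E w y)"

definition bval :: "bool \<Rightarrow> real" where
  "bval c = (if c then 1 else 0)"

definition psi_var :: "('e \<Rightarrow> real) \<Rightarrow> ('e \<times> bool) \<Rightarrow> bool \<Rightarrow> real" where
  "psi_var w i c = exp (- wdd w i * bval c)"

definition psi_fac :: "'e set \<Rightarrow> ('e \<Rightarrow> 'v set) \<Rightarrow> 'v set \<Rightarrow> 'v \<Rightarrow> (('e \<times> bool) \<Rightarrow> bool) \<Rightarrow> real" where
  "psi_fac E ends B v z =
     (let s = card {j \<in> delta E ends v. z j} in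
      if v \<in> B then (if s \<ge> 2 then 1 else 0) else (if s = 2 then 1 else 0))"

definition local_assign :: "'e set \<Rightarrow> ('e \<Rightarrow> 'v set) \<Rightarrow> 'v \<Rightarrow> ('e \<times> bool) \<Rightarrow> bool
     \<Rightarrow> (('e \<times> bool) \<Rightarrow> bool) set" where
  "local_assign E ends v i c = {z. (\<forall>j. j \<notin> delta E ends v \<longrightarrow> \<not> z j) \<and> z i = c}"

(* max-product BP messages at iteration t:
   first component  m_{v -> i}(c)  (factor to variable),
   second component m_{i -> v}(c)  (variable to factor);
   all messages initialised to 1. *)
fun bp_msgs :: "'e set \<Rightarrow> ('e \<Rightarrow> 'v set) \<Rightarrow> 'v set \<Rightarrow> ('e \<Rightarrow> real) \<Rightarrow> nat \<Rightarrow>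
     ('v \<Rightarrow> ('e \<times> bool) \<Rightarrow> bool \<Rightarrow> real) \<times> (('e \<times> bool) \<Rightarrow> 'v \<Rightarrow> bool \<Rightarrow> real)" where
  "bp_msgs E ends B w 0 = (\<lambda>v i c. 1, \<lambda>i v c. 1)"
| "bp_msgs E ends B w (Suc t) =
     (let mf = fst (bp_msgs E ends B w t); mv = snd (bp_msgs E ends B w t) in
      (\<lambda>v i c. Max ((\<lambda>z. psi_fac E ends B v z *
                         (\<Prod>j \<in> delta E ends v - {i}. mv j v (z j))) ` local_assign E ends v i c),
       \<lambda>i v c. psi_var w i c * (\<Prod>v' \<in> ends (fst i) - {v}. mf v' i c)))"

(* belief b_i[c] at iteration t; the factors containing x_i are the endpoints of edge fst i *)
definition belief :: "'e set \<Rightarrow> ('e \<Rightarrow> 'v set) \<Rightarrow> 'v set \<Rightarrow> ('e \<Rightarrow> real) \<Rightarrow> nat \<Rightarrow>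
     ('e \<times> bool) \<Rightarrow> bool \<Rightarrow> real" where
  "belief E ends B w t i c =
     psi_var w i c * (\<Prod>v \<in> ends (fst i). fst (bp_msgs E ends B w t) v i c)"

(* BP estimate: Some 1, Some 0, or None ("?") *)
definition bp_estimate :: "'e set \<Rightarrow> ('e \<Rightarrow> 'v set) \<Rightarrow> 'v set \<Rightarrow> ('e \<Rightarrow> real) \<Rightarrow> nat \<Rightarrow>
     ('e \<times> bool) \<Rightarrow> real option" where
  "bp_estimate E ends B w t i =
     (if belief E ends B w t i True > belief E ends B w t i False then Some 1
      else if belief E ends B w t i True < belief E ends B w t i False then Some 0
      else None)"

end

theory Submission
  imports Defs
begin

text \<open>By uniqueness, the optimum \<open>x\<^sup>*\<close> is integral and equal on the two copies of every edge, so
  it is the indicator of an edge set \<open>M\<close>. Every closed alternating walk -- raising edges outside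
  \<open>M\<close>, lowering edges of \<open>M\<close>, and entering or leaving through blossom vertices where the degree
  constraint has slack -- has positive cost, since otherwise pushing a little flow around it would
  give a second optimum. Shortest-walk potentials in the alternating digraph therefore provide
  dual variables \<open>s\<close> with a uniform margin \<open>\<delta>\<close>: \<open>w\<^sub>f \<ge> s\<^sub>u + s\<^sub>v + \<delta>\<close> off \<open>M\<close> and
  \<open>w\<^sub>g \<le> s\<^sub>u + s\<^sub>v - \<delta>\<close> on \<open>M\<close>. Along max-product BP the log-ratio of every message stays within
  a slack \<open>\<rho>\<close> of \<open>s\<close> on the side favouring \<open>x\<^sup>*\<close>, and the margin shrinks the slack by \<open>\<delta>\<close>
  every two iterations; once it has vanished, every belief favours \<open>x\<^sup>*\<close> by a factor \<open>e\<^sup>\<delta>\<close>.\<close>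

section \<open>Walks and potentials in a finite digraph\<close>

fun walk :: "'a set \<Rightarrow> ('a \<Rightarrow> 'n) \<Rightarrow> ('a \<Rightarrow> 'n) \<Rightarrow> 'n \<Rightarrow> 'a list \<Rightarrow> bool" where
  "walk A s t a [] = True"
| "walk A s t a (x # W) = (x \<in> A \<and> s x = a \<and> walk A s t (t x) W)"

fun walk_end :: "('a \<Rightarrow> 'n) \<Rightarrow> 'n \<Rightarrow> 'a list \<Rightarrow> 'n" where
  "walk_end t a [] = a"
| "walk_end t a (x # W) = walk_end t (t x) W"

lemma walk_append: "walk A s t a (W1 @ W2) \<longleftrightarrow> walk A s t a W1 \<and> walk A s t (walk_end t a W1) W2"
  by (induction W1 arbitrary: a) auto

lemma walk_end_append: "walk_end t a (W1 @ W2) = walk_end t (walk_end t a W1) W2"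
  by (induction W1 arbitrary: a) auto

lemma walk_subset: "walk A s t a W \<Longrightarrow> set W \<subseteq> A"
  by (induction W arbitrary: a) auto

lemma walk_end_in_targets: "walk A s t a W \<Longrightarrow> W \<noteq> [] \<Longrightarrow> walk_end t a W \<in> t ` A"
proof (induction W arbitrary: a)
  case (Cons x W)
  then show ?case by (cases W) auto
qed simp

text \<open>Pigeonhole on the end points of the prefixes of lengths \<open>1, \<dots>, card (t ` A) + 1\<close>.\<close>
lemma long_walk_has_closed_subwalk:
  assumes "finite A" "walk A s t a W" "card (t ` A) < length W"
  obtains W1 W2 W3 where "W = W1 @ W2 @ W3" "W2 \<noteq> []" "length W2 \<le> card (t ` A)"
    "walk_end t (walk_end t a W1) W2 = walk_end t a W1"
proof -
  let ?N = "card (t ` A)"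
  define f where "f k = walk_end t a (take k W)" for k
  have "f ` {1..Suc ?N} \<subseteq> t ` A"
  proof
    fix y assume "y \<in> f ` {1..Suc ?N}"
    then obtain k where k: "k \<in> {1..Suc ?N}" "y = f k" by blast
    have "walk A s t a (take k W)"
      using assms(2) walk_append[of A s t a "take k W" "drop k W"] by simp
    moreover have "take k W \<noteq> []" using k assms(3) by auto
    ultimately show "y \<in> t ` A" using k by (simp add: f_def walk_end_in_targets)
  qed
  then have "card (f ` {1..Suc ?N}) < card {1..Suc ?N}"
    using card_mono[OF finite_imageI[OF assms(1)], of "f ` {1..Suc ?N}" t] by simp
  then have "\<not> inj_on f {1..Suc ?N}" using card_image by fastforce
  then obtain k1 k2 where k: "k1 < k2" "k1 \<in> {1..Suc ?N}" "k2 \<in> {1..Suc ?N}" "f k1 = f k2"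
    unfolding inj_on_def by (metis linorder_neqE_nat)
  define W1 W2 W3 where "W1 = take k1 W" "W2 = drop k1 (take k2 W)" "W3 = drop k2 W"
  have split: "take k2 W = W1 @ W2"
    using k(1) append_take_drop_id[of k1 "take k2 W"] by (simp add: W1_W2_W3_def min_absorb1)
  show thesis
  proof (rule that)
    show "W = W1 @ W2 @ W3"
    proof -
      have "W = take k2 W @ W3" by (simp add: W1_W2_W3_def)
      also have "\<dots> = W1 @ W2 @ W3" by (simp add: split)
      finally show ?thesis .
    qed
    show "W2 \<noteq> []" using k assms(3) by (simp add: W1_W2_W3_def)
    show "length W2 \<le> ?N" using k by (simp add: W1_W2_W3_def)
    show "walk_end t (walk_end t a W1) W2 = walk_end t a W1"
    proof -
      have "walk_end t a W1 = f k1" by (simp add: f_def W1_W2_W3_def)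
      also have "\<dots> = f k2" by (fact k(4))
      also have "\<dots> = walk_end t (walk_end t a W1) W2" by (simp add: f_def split walk_end_append)
      finally show ?thesis ..
    qed
  qed
qed

lemma walk_cost_bounded_below:
  fixes c :: "'a \<Rightarrow> real"
  assumes "finite A"
    and closed_nonneg: "\<And>a W. walk A s t a W \<Longrightarrow> walk_end t a W = a \<Longrightarrow> 0 \<le> (\<Sum>x\<leftarrow>W. c x)"
  obtains K where "\<And>a W. walk A s t a W \<Longrightarrow> - K \<le> (\<Sum>x\<leftarrow>W. c x)"
proof -
  let ?N = "card (t ` A)"
  define C where "C = (\<Sum>x\<in>A. \<bar>c x\<bar>)"
  have "- (?N * C) \<le> (\<Sum>x\<leftarrow>W. c x)" if "walk A s t a W" for a W
    using that
  proof (induction "length W" arbitrary: a W rule: less_induct)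
    case less
    show ?case
    proof (cases "length W \<le> ?N")
      case True
      have "- C \<le> c x" if "x \<in> set W" for x
        using that walk_subset[OF less.prems] member_le_sum[of x A "\<lambda>x. \<bar>c x\<bar>"] assms(1)
        by (force simp: C_def)
      then have "- (length W * C) \<le> (\<Sum>x\<leftarrow>W. c x)"
        using sum_list_mono[of W "\<lambda>_. - C" c] by (simp add: sum_list_triv)
      moreover have "length W * C \<le> ?N * C"
        using True by (intro mult_right_mono) (auto simp: C_def)
      ultimately show ?thesis by linarith
    next
      case False
      then obtain W1 W2 W3 where W: "W = W1 @ W2 @ W3" "W2 \<noteq> []"
        and closed: "walk_end t (walk_end t a W1) W2 = walk_end t a W1"
        using long_walk_has_closed_subwalk[OF assms(1) less.prems] by (metis not_le)
      have "walk A s t (walk_end t a W1) W2" and walk13: "walk A s t a (W1 @ W3)"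
        using less.prems closed by (auto simp: W walk_append walk_end_append)
      then have "0 \<le> (\<Sum>x\<leftarrow>W2. c x)" using closed_nonneg closed by blast
      moreover have "- (?N * C) \<le> (\<Sum>x\<leftarrow>W1 @ W3. c x)"
        using less.hyps[OF _ walk13] W by simp
      ultimately show ?thesis by (simp add: W)
    qed
  qed
  then show thesis by (rule that)
qed

text \<open>The potential of a node is the infimal cost of a walk starting there.\<close>
lemma potential_of_nonneg_closed_walks:
  fixes c :: "'a \<Rightarrow> real"
  assumes "finite A"
    and closed_nonneg: "\<And>a W. walk A s t a W \<Longrightarrow> walk_end t a W = a \<Longrightarrow> 0 \<le> (\<Sum>x\<leftarrow>W. c x)"
  obtains \<sigma> where "\<And>x. x \<in> A \<Longrightarrow> \<sigma> (s x) - \<sigma> (t x) \<le> c x"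
proof -
  obtain K where K: "\<And>a W. walk A s t a W \<Longrightarrow> - K \<le> (\<Sum>x\<leftarrow>W. c x)"
    using walk_cost_bounded_below[OF assms(1), of s t c] closed_nonneg by blast
  define cost where "cost a = (\<lambda>W. \<Sum>x\<leftarrow>W. c x) ` {W. walk A s t a W}" for a
  have bdd: "bdd_below (cost a)" for a
    unfolding cost_def by (rule bdd_belowI[of _ "- K"]) (use K in blast)
  have "Inf (cost (s x)) - Inf (cost (t x)) \<le> c x" if "x \<in> A" for x
  proof -
    have lower: "Inf (cost (s x)) - c x \<le> y" if "y \<in> cost (t x)" for y
    proof -
      obtain W where "walk A s t (t x) W" "y = (\<Sum>x\<leftarrow>W. c x)"
        using \<open>y \<in> cost (t x)\<close> by (auto simp: cost_def)
      then have "c x + y \<in> cost (s x)"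
        using \<open>x \<in> A\<close> unfolding cost_def by (intro image_eqI[of _ _ "x # W"]) auto
      then have "Inf (cost (s x)) \<le> c x + y" by (rule cInf_lower[OF _ bdd])
      then show ?thesis by simp
    qed
    have "[] \<in> {W. walk A s t (t x) W}" by simp
    then have "cost (t x) \<noteq> {}" unfolding cost_def by blast
    from cInf_greatest[OF this lower] show ?thesis by simp
  qed
  then show thesis by (rule that)
qed

text \<open>Finitely many walks of bounded length: take the least cost-to-length ratio of the labelled ones.\<close>
lemma short_closed_walk_cost_ge_labelled:
  fixes c :: "'a \<Rightarrow> real"
  assumes "finite A"
    and closed: "\<And>a W. walk A s t a W \<Longrightarrow> walk_end t a W = a \<Longrightarrow>
        0 \<le> (\<Sum>x\<leftarrow>W. c x) \<and> ((\<exists>x\<in>set W. l x) \<longrightarrow> 0 < (\<Sum>x\<leftarrow>W. c x))"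
  obtains \<delta> where "\<delta> > 0" "\<And>a W. walk A s t a W \<Longrightarrow> walk_end t a W = a \<Longrightarrow> length W \<le> card (t ` A) \<Longrightarrow>
      \<delta> * real (length (filter l W)) \<le> (\<Sum>x\<leftarrow>W. c x)"
proof -
  define S where "S = {W. set W \<subseteq> A \<and> length W \<le> card (t ` A) \<and>
      (\<exists>a. walk A s t a W \<and> walk_end t a W = a) \<and> (\<exists>x\<in>set W. l x)}"
  define ratio where "ratio W = (\<Sum>x\<leftarrow>W. c x) / length W" for W
  have "finite S"
    using finite_lists_length_le[OF assms(1)] by (rule rev_finite_subset) (auto simp: S_def)
  have ratio_pos: "0 < ratio W" if W: "W \<in> S" for W
  proof -
    have l: "\<exists>x\<in>set W. l x" and "\<exists>a. walk A s t a W \<and> walk_end t a W = a"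
      using W by (simp_all add: S_def)
    then have "0 < (\<Sum>x\<leftarrow>W. c x)" using closed by blast
    moreover have "W \<noteq> []" using l by auto
    ultimately show ?thesis by (simp add: ratio_def)
  qed
  define \<delta> where "\<delta> = (if S = {} then 1 else Min (ratio ` S))"
  have "\<delta> > 0"
  proof (cases "S = {}")
    case False
    then have "\<delta> \<in> ratio ` S" using Min_in[OF finite_imageI[OF \<open>finite S\<close>]] by (simp add: \<delta>_def)
    then show ?thesis using ratio_pos by blast
  qed (simp add: \<delta>_def)
  show thesis
  proof (rule that[OF \<open>\<delta> > 0\<close>])
    fix a W assume W: "walk A s t a W" "walk_end t a W = a" "length W \<le> card (t ` A)"
    show "\<delta> * real (length (filter l W)) \<le> (\<Sum>x\<leftarrow>W. c x)"
    proof (cases "\<exists>x\<in>set W. l x")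
      case True
      then have "W \<in> S" using W walk_subset[OF W(1)] by (auto simp: S_def)
      then have "\<delta> \<le> ratio W" "0 < length W" using \<open>finite S\<close> by (auto simp: \<delta>_def S_def)
      then have "\<delta> * length W \<le> (\<Sum>x\<leftarrow>W. c x)" by (simp add: ratio_def pos_le_divide_eq)
      moreover have "\<delta> * length (filter l W) \<le> \<delta> * length W"
        using \<open>\<delta> > 0\<close> by (simp add: length_filter_le)
      ultimately show ?thesis by linarith
    next
      case False
      then show ?thesis using closed[OF W(1,2)] by (simp add: filter_empty_conv)
    qed
  qed
qed

text \<open>Long closed walks split into shorter closed walks.\<close>
lemma closed_walk_cost_ge_labelled:
  fixes c :: "'a \<Rightarrow> real"
  assumes "finite A"
    and closed: "\<And>a W. walk A s t a W \<Longrightarrow> walk_end t a W = a \<Longrightarrow>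
        0 \<le> (\<Sum>x\<leftarrow>W. c x) \<and> ((\<exists>x\<in>set W. l x) \<longrightarrow> 0 < (\<Sum>x\<leftarrow>W. c x))"
  obtains \<delta> where "\<delta> > 0"
    "\<And>a W. walk A s t a W \<Longrightarrow> walk_end t a W = a \<Longrightarrow> \<delta> * real (length (filter l W)) \<le> (\<Sum>x\<leftarrow>W. c x)"
proof -
  obtain \<delta> where "\<delta> > 0" and short: "\<And>a W. walk A s t a W \<Longrightarrow> walk_end t a W = a \<Longrightarrow>
      length W \<le> card (t ` A) \<Longrightarrow> \<delta> * real (length (filter l W)) \<le> (\<Sum>x\<leftarrow>W. c x)"
  proof (rule short_closed_walk_cost_ge_labelled[where s = s and t = t and c = c and l = l, OF assms(1)])
    show "\<And>a W. walk A s t a W \<Longrightarrow> walk_end t a W = a \<Longrightarrow>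
        0 \<le> (\<Sum>x\<leftarrow>W. c x) \<and> ((\<exists>x\<in>set W. l x) \<longrightarrow> 0 < (\<Sum>x\<leftarrow>W. c x))"
      by (fact closed)
  qed (rule that)
  have "\<delta> * real (length (filter l W)) \<le> (\<Sum>x\<leftarrow>W. c x)"
    if "walk A s t a W" "walk_end t a W = a" for a W
    using that
  proof (induction "length W" arbitrary: a W rule: less_induct)
    case less
    show ?case
    proof (cases "length W \<le> card (t ` A)")
      case True
      then show ?thesis using short less.prems by blast
    next
      case False
      then obtain W1 W2 W3 where W: "W = W1 @ W2 @ W3" "W2 \<noteq> []" "length W2 \<le> card (t ` A)"
        and closed: "walk_end t (walk_end t a W1) W2 = walk_end t a W1"
        using long_walk_has_closed_subwalk[OF assms(1) less.prems(1)] by (metis not_le)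
      have walk2: "walk A s t (walk_end t a W1) W2"
        and walk13: "walk A s t a (W1 @ W3)" "walk_end t a (W1 @ W3) = a"
        using less.prems closed by (auto simp: W walk_append walk_end_append)
      have "\<delta> * real (length (filter l W2)) \<le> (\<Sum>x\<leftarrow>W2. c x)"
        using short[OF walk2 closed W(3)] .
      moreover have "\<delta> * real (length (filter l (W1 @ W3))) \<le> (\<Sum>x\<leftarrow>W1 @ W3. c x)"
        using less.hyps[OF _ walk13] W by simp
      ultimately show ?thesis by (simp add: W distrib_left)
    qed
  qed
  with \<open>\<delta> > 0\<close> show thesis by (rule that)
qed

lemma potential_strict_on_labelled:
  fixes c :: "'a \<Rightarrow> real"
  assumes "finite A"
    and "\<And>a W. walk A s t a W \<Longrightarrow> walk_end t a W = a \<Longrightarrow>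
        0 \<le> (\<Sum>x\<leftarrow>W. c x) \<and> ((\<exists>x\<in>set W. l x) \<longrightarrow> 0 < (\<Sum>x\<leftarrow>W. c x))"
  obtains \<sigma> \<delta> where "\<delta> > 0"
    "\<And>x. x \<in> A \<Longrightarrow> \<sigma> (s x) - \<sigma> (t x) + (if l x then \<delta> else 0) \<le> c x"
proof -
  obtain \<delta> where "\<delta> > 0" and \<delta>:
    "\<And>a W. walk A s t a W \<Longrightarrow> walk_end t a W = a \<Longrightarrow> \<delta> * real (length (filter l W)) \<le> (\<Sum>x\<leftarrow>W. c x)"
  proof (rule closed_walk_cost_ge_labelled[where s = s and t = t and c = c and l = l, OF assms(1)])
    show "\<And>a W. walk A s t a W \<Longrightarrow> walk_end t a W = a \<Longrightarrow>
        0 \<le> (\<Sum>x\<leftarrow>W. c x) \<and> ((\<exists>x\<in>set W. l x) \<longrightarrow> 0 < (\<Sum>x\<leftarrow>W. c x))"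
      by (fact assms(2))
  qed (rule that)
  define c' where "c' x = c x - (if l x then \<delta> else 0)" for x
  have "(\<Sum>x\<leftarrow>W. c' x) = (\<Sum>x\<leftarrow>W. c x) - \<delta> * real (length (filter l W))" for W
    by (induction W) (auto simp: c'_def algebra_simps)
  then have "0 \<le> (\<Sum>x\<leftarrow>W. c' x)" if "walk A s t a W" "walk_end t a W = a" for a W
    using \<delta>[OF that] by simp
  then obtain \<sigma> where \<sigma>: "\<And>x. x \<in> A \<Longrightarrow> \<sigma> (s x) - \<sigma> (t x) \<le> c' x"
    using potential_of_nonneg_closed_walks[OF assms(1), of s t c'] by blast
  show thesis
  proof (rule that[OF \<open>\<delta> > 0\<close>])
    fix x assume "x \<in> A"
    then show "\<sigma> (s x) - \<sigma> (t x) + (if l x then \<delta> else 0) \<le> c x"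
      using \<sigma>[of x] by (simp add: c'_def)
  qed
qed

section \<open>Integrality of the unique optimum\<close>

lemma sum_times_UNIV_bool:
  "(\<Sum>i\<in>F \<times> UNIV. f i) = (\<Sum>e\<in>F. f (e, True) + f (e, False))"
proof -
  have "(\<Sum>i\<in>F \<times> UNIV. f i) = (\<Sum>e\<in>F. \<Sum>b\<in>UNIV. f (e, b))"
    by (simp add: sum.cartesian_product)
  then show ?thesis by (simp add: UNIV_bool add.commute)
qed

locale unique_lp_optimum =
  fixes V :: "'v set" and E :: "'e set" and ends :: "'e \<Rightarrow> 'v set"
    and B :: "'v set" and w :: "'e \<Rightarrow> real" and xstar :: "('e \<times> bool) \<Rightarrow> real"
  assumes finite_V: "finite V" and finite_E: "finite E"
    and ends_E: "\<forall>e \<in> E. ends e \<subseteq> V \<and> card (ends e) = 2"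
    and B_V: "B \<subseteq> V"
    and optimal: "lp_optimal V E ends B w xstar"
    and unique: "\<forall>y. lp_optimal V E ends B w y \<longrightarrow> y = xstar"
begin

definition incident :: "'v \<Rightarrow> 'e set" where
  "incident v = {e \<in> E. v \<in> ends e}"

definition M :: "'e set" where
  "M = {e \<in> E. xstar (e, True) = 1}"

definition deg_M :: "'v \<Rightarrow> nat" where
  "deg_M v = card (incident v \<inter> M)"

lemma feasible_xstar: "lp_feasible V E ends B xstar"
  using optimal by (simp add: lp_optimal_def)

lemma eq_xstar_if_feasible_le:
  "lp_feasible V E ends B y \<Longrightarrow> lp_cost E w y \<le> lp_cost E w xstar \<Longrightarrow> y = xstar"
  using optimal unique unfolding lp_optimal_def by (meson order_trans)

lemma finite_incident: "finite (incident v)"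
  using finite_E by (simp add: incident_def)

lemma delta_eq: "delta E ends v = incident v \<times> UNIV"
  by (auto simp: delta_def ddedges_def incident_def)

lemma mem_delta_iff: "i \<in> delta E ends v \<longleftrightarrow> fst i \<in> E \<and> v \<in> ends (fst i)"
  by (cases i) (auto simp: delta_def ddedges_def)

lemma finite_delta: "finite (delta E ends v)"
  by (simp add: delta_eq finite_incident)

lemma sum_delta: "(\<Sum>i\<in>delta E ends v. f i) = (\<Sum>e\<in>incident v. f (e, True) + f (e, False))"
  by (simp add: delta_eq sum_times_UNIV_bool)

lemma lp_cost_eq: "lp_cost E w y = (\<Sum>e\<in>E. w e * (y (e, True) + y (e, False)))"
  by (simp add: lp_cost_def ddedges_def sum_times_UNIV_bool wdd_def algebra_simps)

lemma xstar_outside: "i \<notin> ddedges E \<Longrightarrow> xstar i = 0"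
  using feasible_xstar by (cases i) (simp add: lp_feasible_def)

lemma xstar_bounds: "i \<in> ddedges E \<Longrightarrow> 0 \<le> xstar i \<and> xstar i \<le> 1"
  using feasible_xstar by (simp add: lp_feasible_def)

text \<open>Only the sums over the two copies of each edge enter the constraints and the cost.\<close>
lemma eq_xstar_if_copy_sums_eq:
  assumes "\<forall>i. i \<notin> ddedges E \<longrightarrow> y i = 0"
    and "\<forall>i \<in> ddedges E. 0 \<le> y i \<and> y i \<le> 1"
    and "\<forall>e \<in> E. y (e, True) + y (e, False) = xstar (e, True) + xstar (e, False)"
  shows "y = xstar"
proof (rule eq_xstar_if_feasible_le)
  have "(\<Sum>i\<in>delta E ends v. y i) = (\<Sum>i\<in>delta E ends v. xstar i)" for v
    unfolding sum_delta using assms(3) by (intro sum.cong) (auto simp: incident_def)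
  then show "lp_feasible V E ends B y"
    using feasible_xstar assms(1,2) by (simp add: lp_feasible_def)
  show "lp_cost E w y \<le> lp_cost E w xstar"
    unfolding lp_cost_eq using assms(3) by (intro sum_mono) auto
qed

lemma xstar_copies_eq: "xstar (e, b) = xstar (e, \<not> b)"
proof -
  define y where "y i = xstar (fst i, \<not> snd i)" for i
  have "y = xstar"
    by (rule eq_xstar_if_copy_sums_eq) (auto simp: y_def ddedges_def xstar_outside xstar_bounds)
  then show ?thesis by (metis y_def fst_conv snd_conv)
qed

lemma xstar_integral:
  assumes "e \<in> E" shows "xstar (e, True) = 0 \<or> xstar (e, True) = 1"
proof (rule ccontr)
  assume fractional: "\<not> (xstar (e, True) = 0 \<or> xstar (e, True) = 1)"
  define p where "p = xstar (e, True)"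
  have "0 \<le> p" "p \<le> 1" using xstar_bounds[of "(e, True)"] assms by (auto simp: p_def ddedges_def)
  define \<epsilon> where "\<epsilon> = min p (1 - p)"
  have "\<epsilon> > 0" using fractional \<open>0 \<le> p\<close> \<open>p \<le> 1\<close> by (auto simp: \<epsilon>_def p_def)
  define y where "y = xstar((e, True) := p + \<epsilon>, (e, False) := p - \<epsilon>)"
  have "y = xstar"
  proof (rule eq_xstar_if_copy_sums_eq)
    show "\<forall>i. i \<notin> ddedges E \<longrightarrow> y i = 0"
      using assms by (auto simp: y_def ddedges_def xstar_outside)
    have "0 \<le> p - \<epsilon>" "p + \<epsilon> \<le> 1" by (auto simp: \<epsilon>_def)
    then show "\<forall>i \<in> ddedges E. 0 \<le> y i \<and> y i \<le> 1"
      using \<open>\<epsilon> > 0\<close> xstar_bounds by (auto simp: y_def)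
    show "\<forall>e'\<in>E. y (e', True) + y (e', False) = xstar (e', True) + xstar (e', False)"
      using xstar_copies_eq[of e False] by (auto simp: y_def p_def)
  qed
  then have "y (e, True) = xstar (e, True)" by simp
  with \<open>\<epsilon> > 0\<close> show False by (simp add: y_def p_def)
qed

lemma xstar_eq: "e \<in> E \<Longrightarrow> xstar (e, b) = (if e \<in> M then 1 else 0)"
  using xstar_integral[of e] xstar_copies_eq[of e b] xstar_copies_eq[of e True]
  by (cases b) (auto simp: M_def)

lemma M_subset_E: "M \<subseteq> E"
  by (auto simp: M_def)

lemma sum_xstar_delta: "(\<Sum>i\<in>delta E ends v. xstar i) = 2 * real (deg_M v)"
proof -
  have "(\<Sum>i\<in>delta E ends v. xstar i) = (\<Sum>e\<in>incident v. if e \<in> M then 2 else 0)"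
    unfolding sum_delta by (intro sum.cong) (auto simp: incident_def xstar_eq)
  also have "\<dots> = 2 * real (deg_M v)"
    by (simp add: sum.inter_restrict[OF finite_incident, symmetric] deg_M_def)
  finally show ?thesis .
qed

lemma deg_M_nonblossom: "v \<in> V \<Longrightarrow> v \<notin> B \<Longrightarrow> deg_M v = 1"
  using feasible_xstar sum_xstar_delta[of v] by (auto simp: lp_feasible_def)

lemma deg_M_blossom:
  assumes "v \<in> V" "v \<in> B" shows "1 \<le> deg_M v"
proof -
  have "2 \<le> 2 * real (deg_M v)"
    using feasible_xstar assms by (simp add: lp_feasible_def flip: sum_xstar_delta)
  then show ?thesis by simp
qed

lemma ex_M_edge:
  assumes "v \<in> V" shows "\<exists>g\<in>M. v \<in> ends g"
proof -
  have "1 \<le> deg_M v" using deg_M_nonblossom[OF assms] deg_M_blossom[OF assms] by fastforce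
  then have "incident v \<inter> M \<noteq> {}" by (auto simp: deg_M_def)
  then show ?thesis by (auto simp: incident_def)
qed

lemma M_edge_unique:
  assumes "deg_M v \<le> 1" "e \<in> M" "v \<in> ends e" "f \<in> M" "v \<in> ends f"
  shows "f = e"
proof -
  have "{e, f} \<subseteq> incident v \<inter> M" using assms M_subset_E by (auto simp: incident_def)
  then have "card {e, f} \<le> deg_M v"
    unfolding deg_M_def using finite_incident by (intro card_mono) auto
  then have "card {e, f} \<le> 1" using assms(1) by linarith
  then show ?thesis by (cases "e = f") auto
qed

lemma ends_eq_pair:
  assumes "e \<in> E" "v \<in> ends e"
  obtains u where "ends e = {v, u}" "u \<noteq> v" "u \<in> V" "v \<in> V"
proof -
  obtain a b where ab: "ends e = {a, b}" "a \<noteq> b" and "ends e \<subseteq> V"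
    using ends_E assms(1) by (auto simp: card_2_iff)
  show thesis
  proof (cases "v = a")
    case True
    then show thesis using ab \<open>ends e \<subseteq> V\<close> by (intro that[of b]) auto
  next
    case False
    then have "v = b" using ab assms(2) by auto
    then show thesis using ab \<open>ends e \<subseteq> V\<close> by (intro that[of a]) auto
  qed
qed

end

section \<open>Closed alternating walks have positive cost\<close>

lemma sum_list_zip_add:
  "length xs = length ys \<Longrightarrow>
   (\<Sum>(x, y)\<leftarrow>zip xs ys. f x + g y) = (\<Sum>x\<leftarrow>xs. f x) + (\<Sum>y\<leftarrow>ys. (g y :: real))"
  by (induction xs ys rule: list_induct2) auto

lemma sum_list_rotate1: "(\<Sum>x\<leftarrow>rotate1 xs. f x) = (\<Sum>x\<leftarrow>xs. (f x :: real))"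
  by (cases xs) auto

lemma walk_consecutive:
  "walk A s t a W \<Longrightarrow> s \<gamma> = walk_end t a W \<Longrightarrow> (\<alpha>, \<beta>) \<in> set (zip W (tl W @ [\<gamma>])) \<Longrightarrow> t \<alpha> = s \<beta>"
proof (induction W arbitrary: a)
  case (Cons x W)
  then show ?case by (cases W) auto
qed simp

text \<open>In the alternating digraph a walk standing at \<open>Node v b\<close> next traverses an edge at \<open>v\<close>
  whose value is increased (\<open>b\<close>) or decreased (\<open>\<not> b\<close>); \<open>Hub\<close> lets walks start and end at
  blossom vertices, whose degree constraint is an inequality.\<close>
datatype 'v alt_node = Hub | Node 'v bool

type_synonym ('v, 'e) alt_arc = "'v alt_node \<times> 'e option \<times> 'v alt_node"

definition sign :: "bool \<Rightarrow> real" where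
  "sign b = (if b then 1 else -1)"

fun arc_cost :: "('e \<Rightarrow> real) \<Rightarrow> ('v, 'e) alt_arc \<Rightarrow> real" where
  "arc_cost w (Node v b, Some e, y) = sign b * w e"
| "arc_cost w _ = 0"

fun out_change :: "('v, 'e) alt_arc \<Rightarrow> 'v \<Rightarrow> real" where
  "out_change (Node u b, Some e, y) v = (if u = v then sign b else 0)"
| "out_change _ v = 0"

fun in_change :: "('v, 'e) alt_arc \<Rightarrow> 'v \<Rightarrow> real" where
  "in_change (x, Some e, Node u b) v = (if u = v then - sign b else 0)"
| "in_change _ v = 0"

context unique_lp_optimum
begin

definition edge_sign :: "'e \<Rightarrow> real" where
  "edge_sign e = (if e \<in> M then -1 else 1)"

definition alt_arcs :: "('v, 'e) alt_arc set" where
  "alt_arcs =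
     {(Node v True, Some f, Node u False) | v f u. f \<in> E - M \<and> ends f = {v, u} \<and> v \<noteq> u}
   \<union> {(Node v False, Some g, Node u True) | v g u. g \<in> M \<and> ends g = {v, u} \<and> v \<noteq> u}
   \<union> {(Hub, None, Node v True) | v. v \<in> B} \<union> {(Node v False, None, Hub) | v. v \<in> B}
   \<union> {(Hub, None, Node v False) | v. v \<in> B \<and> 2 \<le> deg_M v}
   \<union> {(Node v True, None, Hub) | v. v \<in> B \<and> 2 \<le> deg_M v}"

abbreviation alt_walk :: "'v alt_node \<Rightarrow> ('v, 'e) alt_arc list \<Rightarrow> bool" where
  "alt_walk \<equiv> walk alt_arcs fst (snd \<circ> snd)"

lemma finite_alt_arcs: "finite alt_arcs"
proof -
  define N where "N = insert Hub {Node v b | v b. v \<in> V}"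
  have "{Node v b | v b. v \<in> V} = case_prod Node ` (V \<times> UNIV)" by auto
  then have "finite N" using finite_V by (simp add: N_def)
  have "ends e \<subseteq> V" if "e \<in> E" for e using ends_E that by blast
  then have "alt_arcs \<subseteq> N \<times> insert None (Some ` E) \<times> N"
    using B_V M_subset_E unfolding alt_arcs_def N_def by blast
  moreover have "finite (N \<times> insert None (Some ` E) \<times> N)"
    using \<open>finite N\<close> finite_E by simp
  ultimately show ?thesis by (rule finite_subset)
qed

lemma alt_arc_with_edge:
  assumes "\<alpha> \<in> alt_arcs" "fst (snd \<alpha>) = Some e"
  shows "e \<in> E" "arc_cost w \<alpha> = edge_sign e * w e"
    "in_change \<alpha> v + out_change \<alpha> v = (if v \<in> ends e then edge_sign e else 0)"
  using assms M_subset_E unfolding alt_arcs_def by (auto simp: edge_sign_def sign_def)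

lemma alt_arc_without_edge:
  "arc_cost w (x, None, y) = 0" "in_change (x, None, y) v = 0" "out_change (x, None, y) v = 0"
  by (cases x; cases y; simp)+

lemma consecutive_alt_arcs:
  assumes "\<alpha> \<in> alt_arcs" "\<beta> \<in> alt_arcs" "snd (snd \<alpha>) = fst \<beta>"
  shows "v \<notin> B \<Longrightarrow> in_change \<alpha> v + out_change \<beta> v = 0"
    and "v \<in> B \<Longrightarrow> (if 2 \<le> deg_M v then -1 else 0) \<le> in_change \<alpha> v + out_change \<beta> v"
  using assms unfolding alt_arcs_def by (auto simp: sign_def)
definition alt_flow :: "('v, 'e) alt_arc list \<Rightarrow> 'e \<Rightarrow> real" where
  "alt_flow W e = edge_sign e * real (count_list (map (fst \<circ> snd) W) (Some e))"

definition perturb :: "real \<Rightarrow> ('v, 'e) alt_arc list \<Rightarrow> 'e \<times> bool \<Rightarrow> real" where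
  "perturb \<epsilon> W i = xstar i + (if fst i \<in> E then \<epsilon> * alt_flow W (fst i) else 0)"

lemma sum_alt_flow:
  assumes "set W \<subseteq> alt_arcs" "finite F" "F \<subseteq> E"
  shows "(\<Sum>e\<in>F. g e * alt_flow W e) =
    (\<Sum>\<alpha>\<leftarrow>W. case fst (snd \<alpha>) of None \<Rightarrow> 0 | Some e \<Rightarrow> if e \<in> F then g e * edge_sign e else 0)"
  using assms(1)
proof (induction W)
  case (Cons \<alpha> W)
  have "(\<Sum>e\<in>F. g e * alt_flow (\<alpha> # W) e) =
      (\<Sum>e\<in>F. if fst (snd \<alpha>) = Some e then g e * edge_sign e else 0) + (\<Sum>e\<in>F. g e * alt_flow W e)"
    unfolding sum.distrib[symmetric] by (rule sum.cong) (simp_all add: alt_flow_def algebra_simps)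
  also have "(\<Sum>e\<in>F. if fst (snd \<alpha>) = Some e then g e * edge_sign e else 0) =
      (case fst (snd \<alpha>) of None \<Rightarrow> 0 | Some e \<Rightarrow> if e \<in> F then g e * edge_sign e else 0)"
    using assms(2) by (cases "fst (snd \<alpha>)") (simp_all add: sum.delta)
  finally show ?case using Cons by simp
qed (simp add: alt_flow_def)

lemma lp_cost_perturb:
  assumes "set W \<subseteq> alt_arcs"
  shows "lp_cost E w (perturb \<epsilon> W) = lp_cost E w xstar + 2 * \<epsilon> * (\<Sum>\<alpha>\<leftarrow>W. arc_cost w \<alpha>)"
proof -
  have "lp_cost E w (perturb \<epsilon> W) = lp_cost E w xstar + 2 * \<epsilon> * (\<Sum>e\<in>E. w e * alt_flow W e)"
    by (simp add: lp_cost_eq perturb_def algebra_simps sum.distrib sum_distrib_left)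
  also have "(\<Sum>e\<in>E. w e * alt_flow W e) = (\<Sum>\<alpha>\<leftarrow>W. arc_cost w \<alpha>)"
    unfolding sum_alt_flow[OF assms finite_E subset_refl]
  proof (intro arg_cong[where f = sum_list] map_cong refl)
    fix \<alpha> assume "\<alpha> \<in> set W"
    then have "\<alpha> \<in> alt_arcs" using assms by blast
    then show "(case fst (snd \<alpha>) of None \<Rightarrow> 0 | Some e \<Rightarrow> if e \<in> E then w e * edge_sign e else 0) = arc_cost w \<alpha>"
      using alt_arc_with_edge[of \<alpha>] alt_arc_without_edge
      by (cases \<alpha>) (auto split: option.split)
  qed
  finally show ?thesis .
qed

lemma degree_perturb:
  assumes "set W \<subseteq> alt_arcs"
  shows "(\<Sum>i\<in>delta E ends v. perturb \<epsilon> W i) =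
    2 * real (deg_M v) + 2 * \<epsilon> * (\<Sum>\<alpha>\<leftarrow>W. in_change \<alpha> v + out_change \<alpha> v)"
proof -
  have "incident v \<subseteq> E" by (auto simp: incident_def)
  have "(\<Sum>i\<in>delta E ends v. perturb \<epsilon> W i) =
      (\<Sum>i\<in>delta E ends v. xstar i) + 2 * \<epsilon> * (\<Sum>e\<in>incident v. 1 * alt_flow W e)"
    by (simp add: sum_delta perturb_def sum.distrib sum_distrib_left incident_def algebra_simps)
  also have "(\<Sum>e\<in>incident v. 1 * alt_flow W e) = (\<Sum>\<alpha>\<leftarrow>W. in_change \<alpha> v + out_change \<alpha> v)"
    unfolding sum_alt_flow[OF assms finite_incident \<open>incident v \<subseteq> E\<close>]
  proof (intro arg_cong[where f = sum_list] map_cong refl)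
    fix \<alpha> assume "\<alpha> \<in> set W"
    then have "\<alpha> \<in> alt_arcs" using assms by blast
    then show "(case fst (snd \<alpha>) of None \<Rightarrow> 0 | Some e \<Rightarrow> if e \<in> incident v then 1 * edge_sign e else 0) =
        in_change \<alpha> v + out_change \<alpha> v"
      using alt_arc_with_edge[of \<alpha>] alt_arc_without_edge
      by (cases \<alpha>) (auto simp: incident_def split: option.split)
  qed
  finally show ?thesis by (simp add: sum_xstar_delta)
qed

lemma closed_alt_walk_pairs:
  assumes walk: "alt_walk a W" and closed: "walk_end (snd \<circ> snd) a W = a"
    and pair: "(\<alpha>, \<beta>) \<in> set (zip W (rotate1 W))"
  shows "\<alpha> \<in> alt_arcs" "\<beta> \<in> alt_arcs" "snd (snd \<alpha>) = fst \<beta>"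
proof -
  obtain \<gamma> W' where W: "W = \<gamma> # W'" using pair by (cases W) auto
  have "\<alpha> \<in> set W" "\<beta> \<in> set W" using pair set_zip_leftD set_zip_rightD by fastforce+
  then show "\<alpha> \<in> alt_arcs" "\<beta> \<in> alt_arcs" using walk_subset[OF walk] by blast+
  have "fst \<gamma> = walk_end (snd \<circ> snd) a W" using walk closed W by simp
  moreover have "(\<alpha>, \<beta>) \<in> set (zip W (tl W @ [\<gamma>]))" using pair W by simp
  ultimately show "snd (snd \<alpha>) = fst \<beta>" using walk_consecutive[OF walk] by fastforce
qed

lemma degree_change_closed_alt_walk:
  assumes "alt_walk a W" "walk_end (snd \<circ> snd) a W = a"
  shows "v \<notin> B \<Longrightarrow> (\<Sum>\<alpha>\<leftarrow>W. in_change \<alpha> v + out_change \<alpha> v) = 0"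
    and "v \<in> B \<Longrightarrow> (if 2 \<le> deg_M v then - real (length W) else 0)
           \<le> (\<Sum>\<alpha>\<leftarrow>W. in_change \<alpha> v + out_change \<alpha> v)"
proof -
  have regroup: "(\<Sum>\<alpha>\<leftarrow>W. in_change \<alpha> v + out_change \<alpha> v) =
      (\<Sum>(\<alpha>, \<beta>)\<leftarrow>zip W (rotate1 W). in_change \<alpha> v + out_change \<beta> v)"
    by (simp add: sum_list_zip_add sum_list_rotate1 sum_list_addf)
  have pair: "v \<notin> B \<Longrightarrow> in_change \<alpha> v + out_change \<beta> v = 0"
    "v \<in> B \<Longrightarrow> (if 2 \<le> deg_M v then -1 else 0) \<le> in_change \<alpha> v + out_change \<beta> v"
    if "(\<alpha>, \<beta>) \<in> set (zip W (rotate1 W))" for \<alpha> \<beta>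
    using consecutive_alt_arcs[OF closed_alt_walk_pairs[OF assms that]] by auto
  show "v \<notin> B \<Longrightarrow> (\<Sum>\<alpha>\<leftarrow>W. in_change \<alpha> v + out_change \<alpha> v) = 0"
  proof -
    assume "v \<notin> B"
    have "(\<Sum>(\<alpha>, \<beta>)\<leftarrow>zip W (rotate1 W). in_change \<alpha> v + out_change \<beta> v) = (\<Sum>_\<leftarrow>zip W (rotate1 W). 0)"
      using pair(1)[OF _ \<open>v \<notin> B\<close>] by (intro arg_cong[where f = sum_list] map_cong) auto
    then show ?thesis unfolding regroup by simp
  qed
  assume "v \<in> B"
  let ?lb = "if 2 \<le> deg_M v then -1 else 0 :: real"
  have "(\<Sum>_\<leftarrow>zip W (rotate1 W). ?lb) \<le>
      (\<Sum>(\<alpha>, \<beta>)\<leftarrow>zip W (rotate1 W). in_change \<alpha> v + out_change \<beta> v)"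
    using pair(2)[OF _ \<open>v \<in> B\<close>] by (intro sum_list_mono) auto
  then show "(if 2 \<le> deg_M v then - real (length W) else 0) \<le> (\<Sum>\<alpha>\<leftarrow>W. in_change \<alpha> v + out_change \<alpha> v)"
    unfolding regroup by (cases "2 \<le> deg_M v") (simp_all add: sum_list_triv)
qed

lemma perturb_feasible:
  fixes \<epsilon> :: real
  assumes walk: "alt_walk a W" and closed: "walk_end (snd \<circ> snd) a W = a"
    and "0 \<le> \<epsilon>" "\<epsilon> * length W \<le> 1 / 2"
  shows "lp_feasible V E ends B (perturb \<epsilon> W)"
proof -
  have "perturb \<epsilon> W i = 0" if "i \<notin> ddedges E" for i
    using that by (cases i) (simp add: perturb_def xstar_outside ddedges_def)
  moreover have "0 \<le> perturb \<epsilon> W i \<and> perturb \<epsilon> W i \<le> 1" if i: "i \<in> ddedges E" for i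
  proof -
    obtain e b where i: "i = (e, b)" "e \<in> E" using i by (auto simp: ddedges_def)
    have "\<epsilon> * count_list (map (fst \<circ> snd) W) (Some e) \<le> \<epsilon> * length W"
      using count_le_length[of "map (fst \<circ> snd) W" "Some e"] \<open>0 \<le> \<epsilon>\<close> by (simp add: mult_left_mono)
    then show ?thesis
      using i assms(3,4) xstar_eq[OF i(2), of b]
      by (auto simp: perturb_def alt_flow_def edge_sign_def)
  qed
  moreover have "(\<Sum>i\<in>delta E ends v. perturb \<epsilon> W i) = 2" if "v \<in> V - B" for v
    using that degree_perturb[OF walk_subset[OF walk]] degree_change_closed_alt_walk(1)[OF walk closed]
      deg_M_nonblossom by simp
  moreover have "2 \<le> (\<Sum>i\<in>delta E ends v. perturb \<epsilon> W i)" if v: "v \<in> V \<inter> B" for v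
  proof -
    have "2 \<le> 2 * real (deg_M v) + 2 * \<epsilon> * (if 2 \<le> deg_M v then - real (length W) else 0)"
      using deg_M_blossom[of v] v assms(4) by auto
    also have "2 * \<epsilon> * (if 2 \<le> deg_M v then - real (length W) else 0)
        \<le> 2 * \<epsilon> * (\<Sum>\<alpha>\<leftarrow>W. in_change \<alpha> v + out_change \<alpha> v)"
      using degree_change_closed_alt_walk(2)[OF walk closed] v \<open>0 \<le> \<epsilon>\<close> by (intro mult_left_mono) auto
    finally show ?thesis using degree_perturb[OF walk_subset[OF walk]] by simp
  qed
  ultimately show ?thesis by (simp add: lp_feasible_def)
qed

text \<open>Otherwise pushing flow around the walk would yield a second optimum.\<close>
lemma closed_alt_walk_cost_pos:
  assumes walk: "alt_walk a W" and closed: "walk_end (snd \<circ> snd) a W = a"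
    and edge: "\<exists>\<alpha>\<in>set W. fst (snd \<alpha>) \<noteq> None"
  shows "0 < (\<Sum>\<alpha>\<leftarrow>W. arc_cost w \<alpha>)"
proof (rule ccontr)
  assume "\<not> 0 < (\<Sum>\<alpha>\<leftarrow>W. arc_cost w \<alpha>)"
  define \<epsilon> where "\<epsilon> = 1 / (2 * real (length W) + 2)"
  have "0 < \<epsilon>" "\<epsilon> * length W \<le> 1 / 2" by (auto simp: \<epsilon>_def field_simps)
  then have "lp_feasible V E ends B (perturb \<epsilon> W)"
    using perturb_feasible[OF walk closed] by simp
  moreover have "lp_cost E w (perturb \<epsilon> W) \<le> lp_cost E w xstar"
    using lp_cost_perturb[OF walk_subset[OF walk]] \<open>0 < \<epsilon>\<close> \<open>\<not> 0 < _\<close>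
    by (simp add: mult_nonneg_nonpos)
  ultimately have "perturb \<epsilon> W = xstar" by (rule eq_xstar_if_feasible_le)
  obtain \<alpha> e where \<alpha>: "\<alpha> \<in> set W" "fst (snd \<alpha>) = Some e" using edge by auto
  then have "e \<in> E" using alt_arc_with_edge(1) walk_subset[OF walk] by blast
  have "Some e \<in> set (map (fst \<circ> snd) W)" using \<alpha> by force
  then have "alt_flow W e \<noteq> 0" by (simp add: alt_flow_def edge_sign_def count_list_0_iff)
  moreover have "perturb \<epsilon> W (e, True) = xstar (e, True) + \<epsilon> * alt_flow W e"
    using \<open>e \<in> E\<close> by (simp add: perturb_def)
  ultimately show False using \<open>perturb \<epsilon> W = xstar\<close> \<open>0 < \<epsilon>\<close> by simp
qed

lemma closed_alt_walk_cost:
  assumes "alt_walk a W" "walk_end (snd \<circ> snd) a W = a"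
  shows "0 \<le> (\<Sum>\<alpha>\<leftarrow>W. arc_cost w \<alpha>) \<and>
    ((\<exists>\<alpha>\<in>set W. fst (snd \<alpha>) \<noteq> None) \<longrightarrow> 0 < (\<Sum>\<alpha>\<leftarrow>W. arc_cost w \<alpha>))"
proof (cases "\<exists>\<alpha>\<in>set W. fst (snd \<alpha>) \<noteq> None")
  case True
  then show ?thesis using closed_alt_walk_cost_pos[OF assms] by simp
next
  case False
  then have "(\<Sum>\<alpha>\<leftarrow>W. arc_cost w \<alpha>) = (\<Sum>_\<leftarrow>W. 0)"
    by (intro arg_cong[where f = sum_list] map_cong) (auto simp: alt_arc_without_edge)
  then show ?thesis using False by simp
qed

end

section \<open>Dual variables with a uniform margin\<close>

locale dual_margin = unique_lp_optimum V E ends B w xstar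
    for V :: "'v set" and E :: "'e set" and ends B w xstar +
  fixes s :: "'v \<Rightarrow> real" and \<delta> :: real
  assumes margin_pos: "0 < \<delta>"
    and unmatched_margin: "\<And>f u v. f \<in> E \<Longrightarrow> f \<notin> M \<Longrightarrow> ends f = {u, v} \<Longrightarrow> u \<noteq> v \<Longrightarrow>
      s u + s v + \<delta> \<le> w f"
    and matched_margin: "\<And>g u v. g \<in> M \<Longrightarrow> ends g = {u, v} \<Longrightarrow> u \<noteq> v \<Longrightarrow>
      w g \<le> s u + s v - \<delta>"
    and blossom_nonneg: "\<And>v. v \<in> B \<Longrightarrow> 0 \<le> s v"
    and blossom_nonpos: "\<And>v. v \<in> B \<Longrightarrow> 2 \<le> deg_M v \<Longrightarrow> s v \<le> 0"

context unique_lp_optimum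
begin

text \<open>As closed alternating walks have positive cost, the alternating digraph carries a strict
  potential \<open>\<sigma>\<close>; the dual variables are \<open>s v = (\<sigma> (Node v True) - \<sigma> (Node v False)) / 2\<close>.\<close>
lemma exists_dual_margin:
  obtains s \<delta> where "dual_margin V E ends B w xstar s \<delta>"
proof -
  obtain \<sigma> \<delta> where "0 < \<delta>" and \<sigma>: "\<And>\<alpha>. \<alpha> \<in> alt_arcs \<Longrightarrow>
      \<sigma> (fst \<alpha>) - \<sigma> ((snd \<circ> snd) \<alpha>) + (if fst (snd \<alpha>) \<noteq> None then \<delta> else 0) \<le> arc_cost w \<alpha>"
  proof (rule potential_strict_on_labelled[where s = fst and t = "snd \<circ> snd" and c = "arc_cost w"
      and l = "\<lambda>\<alpha>. fst (snd \<alpha>) \<noteq> None", OF finite_alt_arcs])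
    show "\<And>a W. alt_walk a W \<Longrightarrow> walk_end (snd \<circ> snd) a W = a \<Longrightarrow>
        0 \<le> (\<Sum>\<alpha>\<leftarrow>W. arc_cost w \<alpha>) \<and>
        ((\<exists>\<alpha>\<in>set W. fst (snd \<alpha>) \<noteq> None) \<longrightarrow> 0 < (\<Sum>\<alpha>\<leftarrow>W. arc_cost w \<alpha>))"
      by (rule closed_alt_walk_cost)
  qed (rule that)
  define s where "s v = (\<sigma> (Node v True) - \<sigma> (Node v False)) / 2" for v
  show thesis
  proof (intro that[of s \<delta>] dual_margin.intro dual_margin_axioms.intro unique_lp_optimum_axioms)
    fix f u v assume "f \<in> E" "f \<notin> M" "ends f = {u, v}" "u \<noteq> v"
    then have "(Node u True, Some f, Node v False) \<in> alt_arcs" "(Node v True, Some f, Node u False) \<in> alt_arcs"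
      by (auto simp: alt_arcs_def)
    from \<sigma>[OF this(1)] \<sigma>[OF this(2)] show "s u + s v + \<delta> \<le> w f"
      by (simp add: s_def sign_def field_simps)
  next
    fix g u v assume "g \<in> M" "ends g = {u, v}" "u \<noteq> v"
    then have "(Node u False, Some g, Node v True) \<in> alt_arcs" "(Node v False, Some g, Node u True) \<in> alt_arcs"
      by (auto simp: alt_arcs_def)
    from \<sigma>[OF this(1)] \<sigma>[OF this(2)] show "w g \<le> s u + s v - \<delta>"
      by (simp add: s_def sign_def field_simps)
  next
    fix v assume "v \<in> B"
    then have "(Hub, None, Node v True) \<in> alt_arcs" "(Node v False, None, Hub) \<in> alt_arcs"
      by (auto simp: alt_arcs_def)
    from \<sigma>[OF this(1)] \<sigma>[OF this(2)] show "0 \<le> s v" by (simp add: s_def)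
  next
    fix v assume "v \<in> B" "2 \<le> deg_M v"
    then have "(Hub, None, Node v False) \<in> alt_arcs" "(Node v True, None, Hub) \<in> alt_arcs"
      by (auto simp: alt_arcs_def)
    from \<sigma>[OF this(1)] \<sigma>[OF this(2)] show "s v \<le> 0" by (simp add: s_def)
  qed (fact \<open>0 < \<delta>\<close>)
qed

end

section \<open>Max-product messages\<close>

lemma Max_image_le_mult:
  fixes f g :: "'a \<Rightarrow> real"
  assumes "finite S" "S \<noteq> {}" "finite T" "T \<noteq> {}" "0 \<le> K"
    and "\<And>z. z \<in> S \<Longrightarrow> \<exists>z'\<in>T. f z \<le> K * g z'"
  shows "Max (f ` S) \<le> K * Max (g ` T)"
proof -
  have "Max (f ` S) \<in> f ` S" using assms(1,2) by (intro Max_in) auto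
  then obtain z where z: "z \<in> S" "Max (f ` S) = f z" by auto
  obtain z' where z': "z' \<in> T" "f z \<le> K * g z'" using assms(6)[OF z(1)] by blast
  have "K * g z' \<le> K * Max (g ` T)" using assms(3,5) z'(1) by (simp add: mult_left_mono)
  with z z' show ?thesis by linarith
qed

lemma card_insert_Diff_singleton:
  assumes "finite S" "l \<in> S" "i \<notin> S"
  shows "card (insert i (S - {l})) = card S"
proof -
  have "card (insert i (S - {l})) = Suc (card (S - {l}))"
    using assms by (intro card_insert_disjoint) auto
  also have "\<dots> = card S" using assms(1,2) by (rule card_Suc_Diff1)
  finally show ?thesis .
qed

context unique_lp_optimum
begin

abbreviation msg_fv :: "nat \<Rightarrow> 'v \<Rightarrow> 'e \<times> bool \<Rightarrow> bool \<Rightarrow> real" where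
  "msg_fv t \<equiv> fst (bp_msgs E ends B w t)"

abbreviation msg_vf :: "nat \<Rightarrow> 'e \<times> bool \<Rightarrow> 'v \<Rightarrow> bool \<Rightarrow> real" where
  "msg_vf t \<equiv> snd (bp_msgs E ends B w t)"

definition local_value :: "nat \<Rightarrow> 'v \<Rightarrow> 'e \<times> bool \<Rightarrow> ('e \<times> bool \<Rightarrow> bool) \<Rightarrow> real" where
  "local_value t v i z = psi_fac E ends B v z * (\<Prod>j\<in>delta E ends v - {i}. msg_vf t j v (z j))"

definition degree_ok :: "'v \<Rightarrow> nat \<Rightarrow> bool" where
  "degree_ok v n \<longleftrightarrow> (if v \<in> B then 2 \<le> n else n = 2)"

lemma psi_fac_eq:
  "psi_fac E ends B v z = (if degree_ok v (card {j \<in> delta E ends v. z j}) then 1 else 0)"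
  by (simp add: psi_fac_def degree_ok_def Let_def)

lemma msg_fv_Suc: "msg_fv (Suc t) v i c = Max (local_value t v i ` local_assign E ends v i c)"
  by (simp add: Let_def local_value_def)

lemma msg_vf_Suc:
  "msg_vf (Suc t) i v c = psi_var w i c * (\<Prod>u\<in>ends (fst i) - {v}. msg_fv t u i c)"
  by (simp add: Let_def)

(* otherwise the simplifier unfolds every message into nested maxima over all earlier ones *)
declare bp_msgs.simps(2) [simp del]

lemma mem_local_assign_iff:
  "z \<in> local_assign E ends v i c \<longleftrightarrow> (\<forall>j. j \<notin> delta E ends v \<longrightarrow> \<not> z j) \<and> z i = c"
  by (simp add: local_assign_def)

lemma finite_local_assign: "finite (local_assign E ends v i c)"
proof (rule finite_subset)
  show "local_assign E ends v i c \<subseteq> (\<lambda>S j. j \<in> S) ` Pow (delta E ends v)"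
  proof
    fix z assume "z \<in> local_assign E ends v i c"
    then have "{j. z j} \<in> Pow (delta E ends v)" by (auto simp: mem_local_assign_iff)
    then show "z \<in> (\<lambda>S j. j \<in> S) ` Pow (delta E ends v)" by (intro image_eqI[of _ _ "{j. z j}"]) auto
  qed
qed (simp add: finite_delta)

lemma local_value_le_msg_fv_Suc:
  "z \<in> local_assign E ends v i c \<Longrightarrow> local_value t v i z \<le> msg_fv (Suc t) v i c"
  unfolding msg_fv_Suc by (rule Max_ge[OF finite_imageI[OF finite_local_assign] imageI])

lemma local_assign_nonempty: "i \<in> delta E ends v \<Longrightarrow> local_assign E ends v i c \<noteq> {}"
  using mem_local_assign_iff[of "\<lambda>j. c \<and> j = i"] by blast

lemma msg_fv_Suc_le_mult:
  assumes "i \<in> delta E ends v" "0 \<le> K"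
    and "\<And>z. z \<in> local_assign E ends v i c \<Longrightarrow>
           \<exists>z'\<in>local_assign E ends v i c'. local_value t v i z \<le> K * local_value t v i z'"
  shows "msg_fv (Suc t) v i c \<le> K * msg_fv (Suc t) v i c'"
  unfolding msg_fv_Suc
  by (rule Max_image_le_mult[OF finite_local_assign local_assign_nonempty[OF assms(1)]
        finite_local_assign local_assign_nonempty[OF assms(1)] assms(2,3)])

lemma other_end:
  assumes "i \<in> delta E ends v"
  obtains u where "u \<in> V" "i \<in> delta E ends u" "ends (fst i) - {v} = {u}" "ends (fst i) = {v, u}"
    "u \<noteq> v"
proof -
  from assms have "fst i \<in> E" "v \<in> ends (fst i)" by (auto simp: mem_delta_iff)
  then obtain u where "ends (fst i) = {v, u}" "u \<noteq> v" "u \<in> V" by (rule ends_eq_pair)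
  with \<open>fst i \<in> E\<close> show thesis by (intro that[of u]) (auto simp: mem_delta_iff)
qed

lemma msgs_nonneg:
  "v \<in> V \<Longrightarrow> i \<in> delta E ends v \<Longrightarrow> 0 \<le> msg_fv t v i c \<and> 0 \<le> msg_vf t i v c"
proof (induction t arbitrary: v i c)
  case (Suc t)
  define z where "z = (\<lambda>j. c \<and> j = i)"
  have z: "z \<in> local_assign E ends v i c" using Suc.prems by (auto simp: mem_local_assign_iff z_def)
  have "0 \<le> msg_vf t j v (z j)" if "j \<in> delta E ends v - {i}" for j
    using Suc.IH[OF Suc.prems(1), of j "z j"] that by simp
  then have "0 \<le> local_value t v i z"
    unfolding local_value_def by (intro mult_nonneg_nonneg prod_nonneg) (auto simp: psi_fac_eq)
  also have "\<dots> \<le> msg_fv (Suc t) v i c"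
    using z by (rule local_value_le_msg_fv_Suc)
  finally have "0 \<le> msg_fv (Suc t) v i c" .
  moreover obtain u where "u \<in> V" "i \<in> delta E ends u" "ends (fst i) - {v} = {u}"
    "ends (fst i) = {v, u}" "u \<noteq> v"
    using Suc.prems(2) by (rule other_end)
  then have "0 \<le> msg_vf (Suc t) i v c"
    unfolding msg_vf_Suc using Suc.IH[of u i c] by (simp add: psi_var_def)
  ultimately show ?case by blast
qed simp

lemma local_value_nonneg: "v \<in> V \<Longrightarrow> 0 \<le> local_value t v i z"
  unfolding local_value_def using msgs_nonneg
  by (intro mult_nonneg_nonneg prod_nonneg) (auto simp: psi_fac_eq)

text \<open>The messages agreeing with the optimum never vanish: they are witnessed by the
  assignment \<open>x\<^sup>*\<close> itself.\<close>
lemma msgs_pos_at_xstar: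
  "v \<in> V \<Longrightarrow> i \<in> delta E ends v \<Longrightarrow>
    0 < msg_fv t v i (fst i \<in> M) \<and> 0 < msg_vf t i v (fst i \<in> M)"
proof (induction t arbitrary: v i)
  case (Suc t)
  define z where "z = (\<lambda>j. j \<in> delta E ends v \<and> fst j \<in> M)"
  have z: "z \<in> local_assign E ends v i (fst i \<in> M)"
    using Suc.prems by (auto simp: mem_local_assign_iff z_def)
  have "card {j \<in> delta E ends v. z j} = card ((incident v \<inter> M) \<times> (UNIV :: bool set))"
    by (rule arg_cong[where f = card]) (auto simp: z_def delta_eq)
  then have "card {j \<in> delta E ends v. z j} = 2 * deg_M v"
    by (simp add: card_cartesian_product deg_M_def)
  then have "psi_fac E ends B v z = 1"
    using deg_M_nonblossom[OF Suc.prems(1)] deg_M_blossom[OF Suc.prems(1)]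
    by (auto simp: psi_fac_eq degree_ok_def)
  moreover have "0 < msg_vf t j v (z j)" if "j \<in> delta E ends v - {i}" for j
    using Suc.IH[OF Suc.prems(1), of j] that by (simp add: z_def)
  then have "0 < (\<Prod>j\<in>delta E ends v - {i}. msg_vf t j v (z j))" by (rule prod_pos)
  ultimately have "0 < local_value t v i z" by (simp add: local_value_def)
  also have "\<dots> \<le> msg_fv (Suc t) v i (fst i \<in> M)"
    using z by (rule local_value_le_msg_fv_Suc)
  finally have "0 < msg_fv (Suc t) v i (fst i \<in> M)" .
  moreover obtain u where "u \<in> V" "i \<in> delta E ends u" "ends (fst i) - {v} = {u}"
    "ends (fst i) = {v, u}" "u \<noteq> v"
    using Suc.prems(2) by (rule other_end)
  then have "0 < msg_vf (Suc t) i v (fst i \<in> M)"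
    unfolding msg_vf_Suc using Suc.IH[of u i] by (simp add: psi_var_def)
  ultimately show ?case by blast
qed simp

lemma belief_eq_ends:
  assumes "e \<in> E"
  obtains p q where "p \<in> V" "q \<in> V" "(e, b) \<in> delta E ends p" "(e, b) \<in> delta E ends q"
    "ends e = {p, q}" "p \<noteq> q"
    "\<And>c. belief E ends B w t (e, b) c =
      exp (- w e * bval c) * (msg_fv t p (e, b) c * msg_fv t q (e, b) c)"
proof -
  obtain p q where pq: "ends e = {p, q}" "p \<noteq> q" "ends e \<subseteq> V"
    using ends_E assms by (auto simp: card_2_iff)
  then show thesis
    using assms by (intro that[of p q]) (auto simp: mem_delta_iff belief_def psi_var_def wdd_def)
qed

lemma local_value_mono:
  assumes "v \<in> V" "psi_fac E ends B v z \<le> psi_fac E ends B v z'" "\<And>j. j \<noteq> i \<Longrightarrow> z' j = z j"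
  shows "local_value t v i z \<le> local_value t v i z'"
proof -
  have "(\<Prod>j\<in>delta E ends v - {i}. msg_vf t j v (z' j)) = (\<Prod>j\<in>delta E ends v - {i}. msg_vf t j v (z j))"
    using assms(3) by (intro prod.cong) auto
  moreover have "0 \<le> (\<Prod>j\<in>delta E ends v - {i}. msg_vf t j v (z j))"
    using msgs_nonneg assms(1) by (intro prod_nonneg) auto
  ultimately show ?thesis using assms(2) by (simp add: local_value_def mult_right_mono)
qed

text \<open>Swapping \<open>x\<^sub>i\<close> with a variable \<open>x\<^sub>l\<close> of the opposite value keeps \<open>\<psi>\<^sub>v\<close> and all incoming
  messages except the one from \<open>l\<close>.\<close>
lemma local_value_swap:
  assumes "v \<in> V" "i \<in> delta E ends v" "l \<in> delta E ends v" "z l \<noteq> z i"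
    and "0 \<le> K" "msg_vf t l v (z l) \<le> K * msg_vf t l v (z i)"
  shows "local_value t v i z \<le> K * local_value t v i (z(i := z l, l := z i))"
proof -
  let ?z' = "z(i := z l, l := z i)"
  let ?S = "{j \<in> delta E ends v. z j}"
  let ?P = "delta E ends v - {i}"
  have "l \<noteq> i" using assms(4) by auto
  have "card {j \<in> delta E ends v. ?z' j} = card ?S"
  proof (cases "z i")
    case True
    then have "{j \<in> delta E ends v. ?z' j} = insert l (?S - {i})" using assms(2-4) by auto
    moreover have "card (insert l (?S - {i})) = card ?S"
      using True assms(2-4) finite_delta by (intro card_insert_Diff_singleton) auto
    ultimately show ?thesis by simp
  next
    case False
    then have "{j \<in> delta E ends v. ?z' j} = insert i (?S - {l})" using assms(2-4) by auto
    moreover have "card (insert i (?S - {l})) = card ?S"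
      using False assms(2-4) finite_delta by (intro card_insert_Diff_singleton) auto
    ultimately show ?thesis by simp
  qed
  then have psi: "psi_fac E ends B v ?z' = psi_fac E ends B v z" by (simp add: psi_fac_eq)
  let ?R = "psi_fac E ends B v z * (\<Prod>j\<in>?P - {l}. msg_vf t j v (z j))"
  have "finite ?P" "l \<in> ?P" using assms(3) \<open>l \<noteq> i\<close> finite_delta by auto
  have "(\<Prod>j\<in>?P - {l}. msg_vf t j v (?z' j)) = (\<Prod>j\<in>?P - {l}. msg_vf t j v (z j))"
    by (intro prod.cong) auto
  then have "local_value t v i ?z' = msg_vf t l v (z i) * ?R"
    using prod.remove[OF \<open>finite ?P\<close> \<open>l \<in> ?P\<close>, of "\<lambda>j. msg_vf t j v (?z' j)"] psi
    by (simp add: local_value_def)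
  moreover have "local_value t v i z = msg_vf t l v (z l) * ?R"
    using prod.remove[OF \<open>finite ?P\<close> \<open>l \<in> ?P\<close>, of "\<lambda>j. msg_vf t j v (z j)"]
    by (simp add: local_value_def)
  moreover have "0 \<le> ?R"
    using msgs_nonneg assms(1) by (intro mult_nonneg_nonneg prod_nonneg) (auto simp: psi_fac_eq)
  ultimately show ?thesis using mult_right_mono[OF assms(6)] by (simp add: mult.assoc)
qed

text \<open>At a blossom vertex \<open>\<psi>\<^sub>v\<close> is monotone, so switching \<open>x\<^sub>i\<close> on never hurts.\<close>
lemma msg_fv_Suc_mono_blossom:
  assumes "v \<in> V" "v \<in> B" "i \<in> delta E ends v"
  shows "msg_fv (Suc t) v i False \<le> msg_fv (Suc t) v i True"
proof -
  have "msg_fv (Suc t) v i False \<le> 1 * msg_fv (Suc t) v i True"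
  proof (rule msg_fv_Suc_le_mult[OF assms(3)])
    fix z assume z: "z \<in> local_assign E ends v i False"
    have "{j \<in> delta E ends v. z j} \<subseteq> {j \<in> delta E ends v. (z(i := True)) j}" by auto
    then have "card {j \<in> delta E ends v. z j} \<le> card {j \<in> delta E ends v. (z(i := True)) j}"
      using finite_delta by (intro card_mono) auto
    then have "psi_fac E ends B v z \<le> psi_fac E ends B v (z(i := True))"
      using assms(2) by (simp add: psi_fac_eq degree_ok_def)
    then have "local_value t v i z \<le> 1 * local_value t v i (z(i := True))"
      using local_value_mono[OF assms(1)] by simp
    moreover have "z(i := True) \<in> local_assign E ends v i True"
      using z assms(3) by (auto simp: mem_local_assign_iff)
    ultimately show "\<exists>z'\<in>local_assign E ends v i True. local_value t v i z \<le> 1 * local_value t v i z'"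
      by blast
  qed simp
  then show ?thesis by (simp only: mult_1_left)
qed

end

section \<open>Convergence of max-product belief propagation\<close>

context dual_margin
begin

text \<open>The log-ratio of every message is pinned to \<open>s v\<close> up to the slack \<open>\<rho>\<close>, on the side that
  favours \<open>x\<^sup>*\<close>; the margin \<open>\<delta>\<close> shrinks the slack by \<open>\<delta>\<close> every second iteration.\<close>
definition fv_bound :: "nat \<Rightarrow> real \<Rightarrow> bool" where
  "fv_bound t \<rho> \<longleftrightarrow> (\<forall>v\<in>V. \<forall>i\<in>delta E ends v.
     (fst i \<in> M \<longrightarrow> exp (s v - \<rho>) * msg_fv t v i False \<le> msg_fv t v i True) \<and>
     (fst i \<notin> M \<longrightarrow> msg_fv t v i True \<le> exp (s v + \<rho>) * msg_fv t v i False))"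

definition vf_bound :: "nat \<Rightarrow> real \<Rightarrow> bool" where
  "vf_bound t \<rho> \<longleftrightarrow> (\<forall>v\<in>V. \<forall>j\<in>delta E ends v.
     (fst j \<notin> M \<longrightarrow> msg_vf t j v True \<le> exp (- s v - \<delta> + \<rho>) * msg_vf t j v False) \<and>
     (fst j \<in> M \<longrightarrow> exp (- s v + \<delta> - \<rho>) * msg_vf t j v False \<le> msg_vf t j v True))"

lemma fv_bound_0: "\<forall>v\<in>V. \<bar>s v\<bar> \<le> \<rho> \<Longrightarrow> fv_bound 0 \<rho>"
  unfolding fv_bound_def by (auto simp: abs_le_iff)

lemma vf_bound_0: "\<forall>v\<in>V. \<bar>s v\<bar> + \<delta> \<le> \<rho> \<Longrightarrow> vf_bound 0 \<rho>"
  unfolding vf_bound_def by (auto simp: abs_le_iff)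

lemma fv_bound_mono:
  assumes "fv_bound t \<rho>" "\<rho> \<le> \<rho>'"
  shows "fv_bound t \<rho>'"
  unfolding fv_bound_def
proof (intro ballI conjI impI)
  fix v i assume v: "v \<in> V" and i: "i \<in> delta E ends v"
  have "0 \<le> msg_fv t v i False" using msgs_nonneg[OF v i] by simp
  then have "exp (s v - \<rho>') * msg_fv t v i False \<le> exp (s v - \<rho>) * msg_fv t v i False"
    "exp (s v + \<rho>) * msg_fv t v i False \<le> exp (s v + \<rho>') * msg_fv t v i False"
    using assms(2) by (auto intro: mult_right_mono)
  then show "fst i \<in> M \<Longrightarrow> exp (s v - \<rho>') * msg_fv t v i False \<le> msg_fv t v i True"
    "fst i \<notin> M \<Longrightarrow> msg_fv t v i True \<le> exp (s v + \<rho>') * msg_fv t v i False"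
    using assms(1) v i unfolding fv_bound_def by fastforce+
qed

lemma vf_bound_Suc:
  assumes "fv_bound t \<rho>"
  shows "vf_bound (Suc t) \<rho>"
  unfolding vf_bound_def
proof (intro ballI conjI impI)
  fix v j assume v: "v \<in> V" and j: "j \<in> delta E ends v"
  obtain u where u: "u \<in> V" "j \<in> delta E ends u" "ends (fst j) - {v} = {u}"
    "ends (fst j) = {v, u}" "u \<noteq> v"
    using j by (rule other_end)
  have "fst j \<in> E" using j by (simp add: mem_delta_iff)
  have True: "msg_vf (Suc t) j v True = exp (- w (fst j)) * msg_fv t u j True"
    and False: "msg_vf (Suc t) j v False = msg_fv t u j False"
    unfolding msg_vf_Suc u(3) by (simp_all add: psi_var_def wdd_def bval_def)
  have "0 \<le> msg_fv t u j False" using msgs_nonneg[OF u(1,2)] by simp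
  show "msg_vf (Suc t) j v True \<le> exp (- s v - \<delta> + \<rho>) * msg_vf (Suc t) j v False"
    if "fst j \<notin> M"
  proof -
    have "msg_fv t u j True \<le> exp (s u + \<rho>) * msg_fv t u j False"
      using assms u that by (auto simp: fv_bound_def)
    moreover have "s v + s u + \<delta> \<le> w (fst j)"
      using unmatched_margin \<open>fst j \<in> E\<close> that u(4,5) by auto
    ultimately have "exp (- w (fst j)) * msg_fv t u j True
        \<le> exp (- w (fst j)) * (exp (s u + \<rho>) * msg_fv t u j False)"
      by (simp add: mult_left_mono)
    also have "\<dots> = exp (- w (fst j) + s u + \<rho>) * msg_fv t u j False"
      using exp_add[of "- w (fst j)" "s u + \<rho>"] by (simp add: algebra_simps)
    also have "\<dots> \<le> exp (- s v - \<delta> + \<rho>) * msg_fv t u j False"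
      using \<open>s v + s u + \<delta> \<le> w (fst j)\<close> \<open>0 \<le> msg_fv t u j False\<close> by (intro mult_right_mono) auto
    finally show ?thesis unfolding True False .
  qed
  show "exp (- s v + \<delta> - \<rho>) * msg_vf (Suc t) j v False \<le> msg_vf (Suc t) j v True"
    if "fst j \<in> M"
  proof -
    have "w (fst j) \<le> s v + s u - \<delta>" using matched_margin that u(4,5) by auto
    then have "exp (- s v + \<delta> - \<rho>) * msg_fv t u j False
        \<le> exp (- w (fst j) + s u - \<rho>) * msg_fv t u j False"
      using \<open>0 \<le> msg_fv t u j False\<close> by (intro mult_right_mono) auto
    also have "\<dots> = exp (- w (fst j)) * (exp (s u - \<rho>) * msg_fv t u j False)"
      using exp_add[of "- w (fst j)" "s u - \<rho>"] by (simp add: algebra_simps)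
    also have "\<dots> \<le> exp (- w (fst j)) * msg_fv t u j True"
      using assms u that by (intro mult_left_mono) (auto simp: fv_bound_def)
    finally show ?thesis unfolding True False .
  qed
qed

lemma matched_exchange:
  assumes "vf_bound t \<rho>" "v \<in> V" "i \<in> delta E ends v" "fst i \<in> M" "deg_M v \<le> 1"
    and z: "z \<in> local_assign E ends v i False"
  shows "\<exists>z'\<in>local_assign E ends v i True.
           local_value t v i z \<le> exp (- s v - \<delta> + \<rho>) * local_value t v i z'"
proof (cases "psi_fac E ends B v z = 0")
  case True
  have "z(i := True) \<in> local_assign E ends v i True" using z assms(3) by (auto simp: mem_local_assign_iff)
  with True show ?thesis
    using local_value_nonneg[OF assms(2)] by (auto simp: local_value_def intro!: bexI)
next
  case False
  let ?S = "{j \<in> delta E ends v. z j}"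
  have "2 \<le> card ?S" using False by (auto simp: psi_fac_eq degree_ok_def split: if_splits)
  then have "\<not> ?S \<subseteq> {(fst i, \<not> snd i)}" using card_mono[of "{(fst i, \<not> snd i)}" ?S] by auto
  then obtain l where l: "l \<in> ?S" "l \<noteq> (fst i, \<not> snd i)" by blast
  have "i \<notin> ?S" using z by (simp add: mem_local_assign_iff)
  then have "fst l \<noteq> fst i" using l by (cases l, cases i) auto
  then have "fst l \<notin> M"
    using M_edge_unique[OF assms(5) assms(4)] l(1) assms(3) by (auto simp: mem_delta_iff)
  have "z l" "\<not> z i" "l \<in> delta E ends v" using l(1) \<open>i \<notin> ?S\<close> assms(3) by auto
  then have "z(i := z l, l := z i) \<in> local_assign E ends v i True"
    using z assms(3) \<open>fst l \<noteq> fst i\<close> by (auto simp: mem_local_assign_iff)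
  moreover have "local_value t v i z \<le> exp (- s v - \<delta> + \<rho>) * local_value t v i (z(i := z l, l := z i))"
  proof (rule local_value_swap[OF assms(2,3) \<open>l \<in> delta E ends v\<close>])
    show "msg_vf t l v (z l) \<le> exp (- s v - \<delta> + \<rho>) * msg_vf t l v (z i)"
      using assms(1,2) \<open>l \<in> delta E ends v\<close> \<open>fst l \<notin> M\<close> \<open>z l\<close> \<open>\<not> z i\<close>
      by (auto simp: vf_bound_def)
  qed (use \<open>z l\<close> \<open>\<not> z i\<close> in auto)
  ultimately show ?thesis by blast
qed

lemma local_value_le_drop_surplus:
  assumes "v \<in> V" "v \<in> B" "i \<in> {j \<in> delta E ends v. z j}" "3 \<le> card {j \<in> delta E ends v. z j}"
  shows "local_value t v i z \<le> local_value t v i (z(i := False))"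
proof (rule local_value_mono[OF assms(1)])
  have "{j \<in> delta E ends v. (z(i := False)) j} = {j \<in> delta E ends v. z j} - {i}" by auto
  then show "psi_fac E ends B v z \<le> psi_fac E ends B v (z(i := False))"
    using assms(2-4) finite_delta by (simp add: psi_fac_eq degree_ok_def)
qed simp

lemma unmatched_exchange:
  assumes "vf_bound t \<rho>" "u \<in> V" "i \<in> delta E ends u" "fst i \<notin> M"
    and z: "z \<in> local_assign E ends u i True"
  shows "\<exists>z'\<in>local_assign E ends u i False.
           local_value t u i z \<le> exp (s u + max 0 (\<rho> - \<delta>)) * local_value t u i z'"
proof (cases "psi_fac E ends B u z = 0")
  case True
  have "(\<lambda>_. False) \<in> local_assign E ends u i False" by (simp add: mem_local_assign_iff)
  with True show ?thesis
    using local_value_nonneg[OF assms(2)] by (auto simp: local_value_def intro!: bexI)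
next
  case False
  let ?K = "exp (s u + max 0 (\<rho> - \<delta>))"
  let ?S = "{j \<in> delta E ends u. z j}"
  have ok: "degree_ok u (card ?S)" using False by (auto simp: psi_fac_eq split: if_splits)
  have "i \<in> ?S" using z assms(3) by (simp add: mem_local_assign_iff)
  obtain g where "g \<in> M" "u \<in> ends g" using ex_M_edge[OF assms(2)] by blast
  then have g: "(g, b) \<in> delta E ends u" "g \<noteq> fst i" for b
    using M_subset_E assms(4) by (auto simp: mem_delta_iff)
  show ?thesis
  proof (cases "(g, True) \<in> ?S \<and> (g, False) \<in> ?S")
    case True
    then have "{i, (g, True), (g, False)} \<subseteq> ?S" using \<open>i \<in> ?S\<close> by auto
    then have "card {i, (g, True), (g, False)} \<le> card ?S" using finite_delta by (intro card_mono) auto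
    moreover have "card {i, (g, True), (g, False)} = 3" using g(2) by (cases i) auto
    ultimately have "3 \<le> card ?S" by simp
    then have "u \<in> B" using ok by (auto simp: degree_ok_def split: if_splits)
    have "local_value t u i z \<le> local_value t u i (z(i := False))"
      using local_value_le_drop_surplus[OF assms(2) \<open>u \<in> B\<close> \<open>i \<in> ?S\<close> \<open>3 \<le> card ?S\<close>] .
    also have "\<dots> \<le> ?K * local_value t u i (z(i := False))"
    proof -
      have "1 \<le> ?K" using blossom_nonneg[OF \<open>u \<in> B\<close>] by simp
      then show ?thesis
        using mult_right_mono[OF _ local_value_nonneg[OF assms(2)], of 1 ?K] by simp
    qed
    finally show ?thesis using z by (intro bexI[of _ "z(i := False)"]) (auto simp: mem_local_assign_iff)
  next
    case False
    then obtain b where "\<not> z (g, b)" using g(1) by auto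
    then have j: "(g, b) \<in> delta E ends u" "fst (g, b) \<in> M" "\<not> z (g, b)" using g(1) \<open>g \<in> M\<close> by auto
    define j where "j = (g, b)"
    note j = j[folded j_def]
    have "z i" using \<open>i \<in> ?S\<close> by simp
    have "j \<noteq> i" using j \<open>z i\<close> by auto
    then have "z(i := z j, j := z i) \<in> local_assign E ends u i False"
      using z j \<open>z i\<close> by (auto simp: mem_local_assign_iff)
    moreover have "local_value t u i z \<le> ?K * local_value t u i (z(i := z j, j := z i))"
    proof (rule local_value_swap[OF assms(2,3) j(1)])
      have "exp (- s u + \<delta> - \<rho>) * msg_vf t j u False \<le> msg_vf t j u True"
        using assms(1,2) j by (auto simp: vf_bound_def)
      then have "msg_vf t j u False \<le> exp (s u - \<delta> + \<rho>) * msg_vf t j u True"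
        by (simp add: exp_diff exp_add exp_minus field_simps)
      also have "\<dots> \<le> ?K * msg_vf t j u True"
        using msgs_nonneg[OF assms(2) j(1)] by (intro mult_right_mono) auto
      finally show "msg_vf t j u (z j) \<le> ?K * msg_vf t j u (z i)" using j \<open>z i\<close> by simp
    qed (use j \<open>z i\<close> in auto)
    ultimately show ?thesis by blast
  qed
qed

lemma fv_bound_Suc:
  assumes "vf_bound t \<rho>"
  shows "fv_bound (Suc t) (max 0 (\<rho> - \<delta>))"
  unfolding fv_bound_def
proof (intro ballI conjI impI)
  fix v i assume v: "v \<in> V" and i: "i \<in> delta E ends v"
  let ?r = "max 0 (\<rho> - \<delta>)"
  have nonneg: "0 \<le> msg_fv (Suc t) v i c" for c using msgs_nonneg[OF v i] by blast
  show "exp (s v - ?r) * msg_fv (Suc t) v i False \<le> msg_fv (Suc t) v i True" if "fst i \<in> M"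
  proof (cases "v \<in> B \<and> 2 \<le> deg_M v")
    case True
    then have "s v \<le> 0" by (intro blossom_nonpos) auto
    then have "exp (s v - ?r) \<le> 1" by simp
    then have "exp (s v - ?r) * msg_fv (Suc t) v i False \<le> 1 * msg_fv (Suc t) v i False"
      using nonneg by (rule mult_right_mono)
    also have "\<dots> \<le> msg_fv (Suc t) v i True" using msg_fv_Suc_mono_blossom v True i by simp
    finally show ?thesis .
  next
    case False
    then have "deg_M v \<le> 1" using deg_M_nonblossom[OF v] by (cases "v \<in> B") auto
    have "msg_fv (Suc t) v i False \<le> exp (- s v - \<delta> + \<rho>) * msg_fv (Suc t) v i True"
      by (rule msg_fv_Suc_le_mult[OF i _ matched_exchange[OF assms v i that \<open>deg_M v \<le> 1\<close>]]) simp
    then have "exp (s v - ?r) * msg_fv (Suc t) v i False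
        \<le> exp (s v - ?r) * (exp (- s v - \<delta> + \<rho>) * msg_fv (Suc t) v i True)"
      by (rule mult_left_mono) simp
    also have "\<dots> = exp (\<rho> - \<delta> - ?r) * msg_fv (Suc t) v i True"
      by (simp add: mult.assoc[symmetric] exp_add[symmetric])
    also have "\<dots> \<le> 1 * msg_fv (Suc t) v i True" using nonneg by (intro mult_right_mono) auto
    finally show ?thesis by simp
  qed
  show "msg_fv (Suc t) v i True \<le> exp (s v + ?r) * msg_fv (Suc t) v i False" if "fst i \<notin> M"
    by (rule msg_fv_Suc_le_mult[OF i _ unmatched_exchange[OF assms v i that]]) simp
qed

lemma fv_bound_add_twice:
  assumes "fv_bound t \<rho>"
  shows "fv_bound (t + 2 * n) (max 0 (\<rho> - n * \<delta>))"
proof (induction n)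
  case 0
  show ?case using fv_bound_mono[OF assms] by simp
next
  case (Suc n)
  have "fv_bound (Suc (Suc (t + 2 * n))) (max 0 (max 0 (\<rho> - n * \<delta>) - \<delta>))"
    using Suc.IH by (intro fv_bound_Suc vf_bound_Suc)
  moreover have "max 0 (max 0 (\<rho> - n * \<delta>) - \<delta>) = max 0 (\<rho> - Suc n * \<delta>)"
    using margin_pos by (simp add: max_def algebra_simps)
  ultimately show ?case by simp
qed

lemma eventually_fv_bound_0: "\<exists>T. \<forall>t\<ge>T. fv_bound t 0"
proof -
  define \<rho> where "\<rho> = (\<Sum>v\<in>V. \<bar>s v\<bar>) + \<delta>"
  have bound: "\<forall>v\<in>V. \<bar>s v\<bar> + \<delta> \<le> \<rho>"
    using member_le_sum[of _ V "\<lambda>v. \<bar>s v\<bar>"] finite_V by (simp add: \<rho>_def)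
  then have "fv_bound 0 \<rho>" using margin_pos by (intro fv_bound_0) force
  have "fv_bound 1 (max 0 (\<rho> - \<delta>))" using fv_bound_Suc[OF vf_bound_0[OF bound]] by simp
  moreover have "max 0 (\<rho> - \<delta>) \<le> \<rho>" using margin_pos by (simp add: \<rho>_def sum_nonneg)
  ultimately have "fv_bound 1 \<rho>" by (rule fv_bound_mono)
  define N where "N = nat \<lceil>\<rho> / \<delta>\<rceil>"
  have "\<rho> / \<delta> \<le> N" unfolding N_def by linarith
  then have "\<rho> \<le> N * \<delta>" using margin_pos by (simp add: field_simps)
  then have start: "fv_bound (2 * N) 0" "fv_bound (1 + 2 * N) 0"
    using fv_bound_add_twice[OF \<open>fv_bound 0 \<rho>\<close>, of N] fv_bound_add_twice[OF \<open>fv_bound 1 \<rho>\<close>, of N]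
    by simp_all
  have "fv_bound t 0" if "2 * N \<le> t" for t
  proof -
    have "\<exists>k. t = 2 * N + 2 * k \<or> t = (1 + 2 * N) + 2 * k" using \<open>2 * N \<le> t\<close> by presburger
    then obtain k where "t = 2 * N + 2 * k \<or> t = (1 + 2 * N) + 2 * k" by blast
    moreover have "max 0 (0 - real k * \<delta>) = 0" using margin_pos by simp
    ultimately show ?thesis
      using fv_bound_add_twice[OF start(1), of k] fv_bound_add_twice[OF start(2), of k] by auto
  qed
  then show ?thesis by blast
qed

lemma belief_margin:
  assumes "fv_bound t 0" "e \<in> E"
  shows "exp \<delta> * belief E ends B w t (e, b) (e \<notin> M) \<le> belief E ends B w t (e, b) (e \<in> M)"
proof -
  obtain p q where pV: "p \<in> V" "q \<in> V" and i: "(e, b) \<in> delta E ends p" "(e, b) \<in> delta E ends q"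
    and pq: "ends e = {p, q}" "p \<noteq> q"
    and belief: "\<And>c. belief E ends B w t (e, b) c =
      exp (- w e * bval c) * (msg_fv t p (e, b) c * msg_fv t q (e, b) c)"
    by (rule belief_eq_ends[where b = b and t = t, OF assms(2)]) (rule that)
  let ?m = "\<lambda>c. msg_fv t p (e, b) c * msg_fv t q (e, b) c"
  have nonneg: "0 \<le> msg_fv t p (e, b) c" "0 \<le> msg_fv t q (e, b) c" for c
    using msgs_nonneg[OF pV(1) i(1)] msgs_nonneg[OF pV(2) i(2)] by blast+
  have reorder: "exp (s p) * x * (exp (s q) * y) = exp (s p + s q) * (x * y)" for x y
    by (simp add: exp_add algebra_simps)
  show ?thesis
  proof (cases "e \<in> M")
    case True
    have "exp (s p) * msg_fv t p (e, b) False \<le> msg_fv t p (e, b) True"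
      "exp (s q) * msg_fv t q (e, b) False \<le> msg_fv t q (e, b) True"
      using assms(1) pV i True by (auto simp: fv_bound_def)
    from mult_mono[OF this nonneg(1)] nonneg(2)
    have bound: "exp (s p + s q) * ?m False \<le> ?m True" by (simp add: reorder)
    have "exp \<delta> \<le> exp (- w e) * exp (s p + s q)"
      using matched_margin[OF True pq(1,2)] by (simp flip: exp_add)
    then have "exp \<delta> * ?m False \<le> exp (- w e) * exp (s p + s q) * ?m False"
      using nonneg by (intro mult_right_mono) auto
    also have "\<dots> \<le> exp (- w e) * ?m True"
      using bound by (simp add: mult.assoc mult_left_mono)
    finally show ?thesis using True by (simp add: belief bval_def)
  next
    case False
    have "msg_fv t p (e, b) True \<le> exp (s p) * msg_fv t p (e, b) False"
      "msg_fv t q (e, b) True \<le> exp (s q) * msg_fv t q (e, b) False"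
      using assms(1) pV i False by (auto simp: fv_bound_def)
    from mult_mono[OF this _ nonneg(2)] nonneg(1)
    have bound: "?m True \<le> exp (s p + s q) * ?m False" by (simp add: reorder)
    have "exp \<delta> * (exp (- w e) * ?m True) \<le> exp \<delta> * exp (- w e) * (exp (s p + s q) * ?m False)"
      using bound by (simp add: mult.assoc mult_left_mono)
    also have "\<dots> = exp (\<delta> + - w e + (s p + s q)) * ?m False"
      by (simp only: exp_add mult.assoc)
    also have "\<dots> \<le> 1 * ?m False"
      using unmatched_margin[OF assms(2) False pq(1,2)] nonneg by (intro mult_right_mono) auto
    finally show ?thesis using False by (simp add: belief bval_def)
  qed
qed

lemma bp_estimate_eq_xstar:
  assumes "fv_bound t 0" "i \<in> ddedges E"
  shows "bp_estimate E ends B w t i = Some (xstar i)"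
proof -
  obtain e b where i: "i = (e, b)" "e \<in> E" using assms(2) by (auto simp: ddedges_def)
  let ?b = "belief E ends B w t (e, b)"
  have delta: "v \<in> V" "(e, b) \<in> delta E ends v" if "v \<in> ends e" for v
    using that i(2) ends_E by (auto simp: mem_delta_iff)
  have "0 < msg_fv t v (e, b) (e \<in> M)" if "v \<in> ends e" for v
    using msgs_pos_at_xstar[OF delta[OF that]] by simp
  then have pos: "0 < ?b (e \<in> M)"
    unfolding belief_def by (simp add: psi_var_def prod_pos)
  have "0 \<le> msg_fv t v (e, b) (e \<notin> M)" if "v \<in> ends e" for v
    using msgs_nonneg[OF delta[OF that]] by blast
  then have nonneg: "0 \<le> ?b (e \<notin> M)"
    unfolding belief_def by (simp add: psi_var_def prod_nonneg)
  have less: "?b (e \<notin> M) < ?b (e \<in> M)"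
  proof (cases "?b (e \<notin> M) = 0")
    case False
    then have "?b (e \<notin> M) < exp \<delta> * ?b (e \<notin> M)" using nonneg margin_pos by simp
    also have "\<dots> \<le> ?b (e \<in> M)" using belief_margin[OF assms(1) i(2)] .
    finally show ?thesis .
  qed (use pos in simp)
  show ?thesis
    using less xstar_eq[OF i(2), of b] by (cases "e \<in> M") (auto simp: bp_estimate_def i(1))
qed

lemma bp_converges: "\<exists>T. \<forall>t\<ge>T. \<forall>i\<in>ddedges E. bp_estimate E ends B w t i = Some (xstar i)"
  using eventually_fv_bound_0 bp_estimate_eq_xstar by blast

end

theorem corollary1:
  fixes V :: "'v set" and E :: "'e set" and ends :: "'e \<Rightarrow> 'v set"
    and B :: "'v set" and w :: "'e \<Rightarrow> real" and xstar :: "('e \<times> bool) \<Rightarrow> real"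
  assumes "finite V" and "finite E"
    and "\<forall>e \<in> E. ends e \<subseteq> V \<and> card (ends e) = 2"
    and "B \<subseteq> V"
    and "lp_optimal V E ends B w xstar"
    and "\<forall>y. lp_optimal V E ends B w y \<longrightarrow> y = xstar"
  shows "\<exists>T. \<forall>t \<ge> T. \<forall>i \<in> ddedges E. bp_estimate E ends B w t i = Some (xstar i)"
proof -
  interpret unique_lp_optimum V E ends B w xstar
    using assms by unfold_locales
  obtain s \<delta> where "dual_margin V E ends B w xstar s \<delta>"
    by (rule exists_dual_margin)
  then show ?thesis by (rule dual_margin.bp_converges)
qed

end
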